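(* There exists a function $f\colon\mathbb{N}\to\mathbb{N}$ such that for every positive integer $n$ and each of the four constructions $Q\in\{Q(\mathscr{M}^{KI}),Q(\mathscr{M}^{KK}),Q(\mathscr{A}^{KK}),Q(\mathscr{H}^{KK})\}$, we have $\mathsf{rw}(Q_{f(n)}(\cdot_{f(n)}))\ge n$, i.e. $\mathsf{rw}(Q_{f(n)}(\mathscr{M}^{KI}_{f(n)}))$, $\mathsf{rw}(Q_{f(n)}(\mathscr{M}^{KK}_{f(n)}))$, $\mathsf{rw}(Q_{f(n)}(\mathscr{A}^{KK}_{f(n)}))$ and $\mathsf{rw}(Q_{f(n)}(\mathscr{H}^{KK}_{f(n)}))$ are all at least $n$.
   Context: Let $X^1,\dots,X^k$ be pairwise disjoint ordered sets $X^j=\{x^j_1,\dots,x^j_m\}$, and let $y^1,\dots,y^k,z^1,\dots,z^{k-1}$ be further distinct vertices. For ordered sets $X,Y$ of size $m$: $\mathcal{M}(X,Y)$ has edges $x_iy_i$, $\mathcal{A}(X,Y)$ has edges $x_iy_j$ ($i\ne j$), $\mathcal{H}(X,Y)$ has edges $x_iy_j$ ($i\le j$); $K(S)$ is the clique on $S$, $K(S,T)$ the complete bipartite graph between $S,T$; unions take unions of vertex and edge sets. Define $Q_k(\mathscr{M}^{KK}_m)=\bigcup_{i\in[k-1]}\mathcal{M}(X^i,X^{i+1})\cup\bigcup_{i\in[k]}K(\{y^i\}\cup X^i)$; $Q_k(\mathscr{M}^{KI}_m)=\bigcup_{i\in[k-1]}\mathcal{M}(X^i,X^{i+1})\cup\bigcup_{i\in[\lceil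 k/2\rceil]}K(\{y^{2i-1}\}\cup X^{2i-1})$; $Q_k(\mathscr{H}^{KK}_m)=\bigcup_{i\in[k-1]}\mathcal{H}(X^i,X^{i+1})\cup\bigcup_{i\in[k]}K(\{y^i\}\cup X^i)$; $Q_k(\mathscr{A}^{KK}_m)=\bigcup_{i\in[k-1]}\mathcal{A}(X^i,X^{i+1})\cup\bigcup_{i\in[k]}K(\{y^i\}\cup X^i)\cup\bigcup_{i\in[k-1]}K(\{z^i\},X^i\cup X^{i+1})$. Rankwidth $\mathsf{rw}(G)$: the cutrank of $X\subseteq V(G)$ is the $\mathbb{F}_2$-rank of the adjacency submatrix with rows $X$ and columns $V(G)\setminus X$; a rank-decomposition is a tree with internal nodes of degree $3$ and a bijection from its leaves to $V(G)$; its width is the maximum over tree edges of the cutrank of the vertices mapped to one side; $\mathsf{rw}(G)$ is the minimum width. *)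

theory Defs
  imports Main
begin

text \<open>A graph is a pair (vertex set, edge set), edges being 2-element sets.\<close>
type_synonym 'v graph = "'v set \<times> 'v set set"

definition gunion :: "'v graph \<Rightarrow> 'v graph \<Rightarrow> 'v graph" where
  "gunion G H = (fst G \<union> fst H, snd G \<union> snd H)"

definition gUnion :: "'i set \<Rightarrow> ('i \<Rightarrow> 'v graph) \<Rightarrow> 'v graph" where
  "gUnion I G = ((\<Union>i\<in>I. fst (G i)), (\<Union>i\<in>I. snd (G i)))"

definition clique :: "'v set \<Rightarrow> 'v graph" where
  "clique S = (S, {e. \<exists>a b. a \<in> S \<and> b \<in> S \<and> a \<noteq> b \<and> e = {a, b}})"

definition cbip :: "'v set \<Rightarrow> 'v set \<Rightarrow> 'v graph" where
  "cbip S T = (S \<union> T, {e. \<exists>a b. a \<in> S \<and> b \<in> T \<and> a \<noteq> b \<and> e = {a, b}})"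

text \<open>Cutrank: the GF(2)-rank of the adjacency submatrix with rows A and columns V - A,
  i.e. the maximum size of a set of rows that is linearly independent over GF(2)
  (no nonempty subset of the rows sums to the zero vector).\<close>
definition cutrank :: "'v graph \<Rightarrow> 'v set \<Rightarrow> nat" where
  "cutrank G A = Max {card S | S. S \<subseteq> A \<and>
     (\<forall>T. T \<subseteq> S \<and> T \<noteq> {} \<longrightarrow>
        (\<exists>c \<in> fst G - A. odd (card {t \<in> T. {t, c} \<in> snd G})))}"

definition tadj :: "nat set set \<Rightarrow> (nat \<times> nat) set" where
  "tadj TE = {(u, v). {u, v} \<in> TE}"

definition is_tree :: "nat set \<Rightarrow> nat set set \<Rightarrow> bool" where
  "is_tree N TE \<longleftrightarrow> finite N \<and> N \<noteq> {} \<and>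
     (\<forall>e \<in> TE. \<exists>u v. u \<in> N \<and> v \<in> N \<and> u \<noteq> v \<and> e = {u, v}) \<and>
     (\<forall>u \<in> N. \<forall>v \<in> N. (u, v) \<in> (tadj TE)\<^sup>*) \<and>
     card TE = card N - 1"

definition tdeg :: "nat set set \<Rightarrow> nat \<Rightarrow> nat" where
  "tdeg TE u = card {e \<in> TE. u \<in> e}"

definition tleaves :: "nat set \<Rightarrow> nat set set \<Rightarrow> nat set" where
  "tleaves N TE = {u \<in> N. tdeg TE u \<le> 1}"

definition is_rank_decomp :: "'v graph \<Rightarrow> nat set \<Rightarrow> nat set set \<Rightarrow> (nat \<Rightarrow> 'v) \<Rightarrow> bool" where
  "is_rank_decomp G N TE lam \<longleftrightarrow> is_tree N TE \<and>
     (\<forall>u \<in> N. tdeg TE u \<le> 1 \<or> tdeg TE u = 3) \<and>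
     bij_betw lam (tleaves N TE) (fst G)"

definition tside :: "nat set set \<Rightarrow> nat set \<Rightarrow> nat \<Rightarrow> nat set" where
  "tside TE e u = {w. (u, w) \<in> (tadj (TE - {e}))\<^sup>*}"

definition decomp_width :: "'v graph \<Rightarrow> nat set \<Rightarrow> nat set set \<Rightarrow> (nat \<Rightarrow> 'v) \<Rightarrow> nat" where
  "decomp_width G N TE lam = Max ({0} \<union>
     {cutrank G (lam ` (tleaves N TE \<inter> tside TE {u, v} u)) | u v. {u, v} \<in> TE})"

definition rankwidth :: "'v graph \<Rightarrow> nat" where
  "rankwidth G = (LEAST w. \<exists>N TE lam. is_rank_decomp G N TE lam \<and> decomp_width G N TE lam \<le> w)"

datatype qv = Xv nat nat | Yv nat | Zv nat

definition Xs :: "nat \<Rightarrow> nat \<Rightarrow> qv set" where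
  "Xs m j = (\<lambda>a. Xv j a) ` {1..m}"

definition Mg :: "nat \<Rightarrow> nat \<Rightarrow> nat \<Rightarrow> qv graph" where
  "Mg m i j = (Xs m i \<union> Xs m j, {e. \<exists>a \<in> {1..m}. e = {Xv i a, Xv j a}})"

definition Ag :: "nat \<Rightarrow> nat \<Rightarrow> nat \<Rightarrow> qv graph" where
  "Ag m i j = (Xs m i \<union> Xs m j, {e. \<exists>a \<in> {1..m}. \<exists>b \<in> {1..m}. a \<noteq> b \<and> e = {Xv i a, Xv j b}})"

definition Hg :: "nat \<Rightarrow> nat \<Rightarrow> nat \<Rightarrow> qv graph" where
  "Hg m i j = (Xs m i \<union> Xs m j, {e. \<exists>a \<in> {1..m}. \<exists>b \<in> {1..m}. a \<le> b \<and> e = {Xv i a, Xv j b}})"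

definition Q_MKK :: "nat \<Rightarrow> nat \<Rightarrow> qv graph" where
  "Q_MKK k m = gunion (gUnion {1..k-1} (\<lambda>i. Mg m i (i+1)))
                      (gUnion {1..k} (\<lambda>i. clique ({Yv i} \<union> Xs m i)))"

definition Q_MKI :: "nat \<Rightarrow> nat \<Rightarrow> qv graph" where
  "Q_MKI k m = gunion (gUnion {1..k-1} (\<lambda>i. Mg m i (i+1)))
                      (gUnion {1..(k+1) div 2} (\<lambda>i. clique ({Yv (2*i-1)} \<union> Xs m (2*i-1))))"

definition Q_HKK :: "nat \<Rightarrow> nat \<Rightarrow> qv graph" where
  "Q_HKK k m = gunion (gUnion {1..k-1} (\<lambda>i. Hg m i (i+1)))
                      (gUnion {1..k} (\<lambda>i. clique ({Yv i} \<union> Xs m i)))"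

definition Q_AKK :: "nat \<Rightarrow> nat \<Rightarrow> qv graph" where
  "Q_AKK k m = gunion (gunion (gUnion {1..k-1} (\<lambda>i. Ag m i (i+1)))
                              (gUnion {1..k} (\<lambda>i. clique ({Yv i} \<union> Xs m i))))
                      (gUnion {1..k-1} (\<lambda>i. cbip {Zv i} (Xs m i \<union> Xs m (i+1))))"

end

theory Submission
  imports Defs "HOL-Library.FuncSet"
begin

text \<open>
  Every rank-decomposition of a graph with at least two vertices has a tree edge whose side
  contains between a third and two thirds of the vertices, so it suffices to bound the cut-rank
  of all such balanced cuts from below.

  In each of the four constructions with \<open>k = m = N\<close>, the vertices \<open>x\<^sup>j\<^sub>a\<close> form an
  \<open>N \<times> N\<close> grid carrying all but \<open>2N\<close> vertices, so a balanced cut \<open>A\<close> puts at least a quarter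
  of the grid on each side. If at least \<open>3n\<close> columns \<open>X\<^sup>j\<close> meet both sides, each of them
  yields a cut edge within \<open>X\<^sup>j\<^sup>-\<^sup>1 \<union> X\<^sup>j\<close>; taking \<open>n\<close> such columns pairwise at distance
  at least 3 gives an induced matching, hence cut-rank at least \<open>n\<close>. Otherwise at least \<open>N/4\<close>
  rows meet both sides, each of them switches sides between two consecutive columns, and by
  pigeonhole more than \<open>n\<close> rows switch at the same pair of columns in the same direction. Between
  consecutive columns the adjacency matrix is the identity, a triangular matrix, or the complement
  of the identity, all nonsingular over GF(2) (the last one in even dimension), which again gives
  cut-rank at least \<open>n\<close>. The choice \<open>N = 48n\<^sup>2 + 16\<close> makes the counting work.
\<close>

section \<open>Balanced edges of subcubic trees\<close>

lemma tadj_iff [simp]: "(u, v) \<in> tadj E \<longleftrightarrow> {u, v} \<in> E"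
  unfolding tadj_def by simp

lemma converse_tadj [simp]: "(tadj E)\<inverse> = tadj E"
  unfolding tadj_def by (auto simp: insert_commute)

lemma rtrancl_tadj_sym: "(u, v) \<in> (tadj E)\<^sup>* \<Longrightarrow> (v, u) \<in> (tadj E)\<^sup>*"
  by (metis converse_tadj rtrancl_converseI)

lemma rtrancl_tadj_mono:
  assumes "E \<subseteq> F" "(u, v) \<in> (tadj E)\<^sup>*"
  shows "(u, v) \<in> (tadj F)\<^sup>*"
proof -
  have "tadj E \<subseteq> tadj F" using assms(1) unfolding tadj_def by auto
  then show ?thesis using assms(2) rtrancl_mono by blast
qed

lemma rtrancl_tadj_insert_cases:
  assumes "(r, x) \<in> (tadj (insert {a, b} E))\<^sup>*"
  shows "(r, x) \<in> (tadj E)\<^sup>* \<or> ((r, a) \<in> (tadj E)\<^sup>* \<and> (b, x) \<in> (tadj E)\<^sup>*)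
     \<or> ((r, b) \<in> (tadj E)\<^sup>* \<and> (a, x) \<in> (tadj E)\<^sup>*)"
  using assms
proof (induction rule: rtrancl_induct)
  case base
  then show ?case by simp
next
  case (step y z)
  then consider "y = a" "z = b" | "y = b" "z = a" | "(y, z) \<in> tadj E"
    by (auto simp: doubleton_eq_iff)
  then show ?case
  proof cases
    case 3
    then show ?thesis using step.IH rtrancl.rtrancl_into_rtrancl by metis
  qed (use step.IH in auto)
qed

lemma reachable_without_edge:
  assumes "\<forall>x\<in>V. \<exists>r\<in>R. (r, x) \<in> (tadj (insert {a, b} E))\<^sup>*"
  obtains c where "c = a \<or> c = b" "\<forall>x\<in>V. \<exists>r\<in>insert c R. (r, x) \<in> (tadj E)\<^sup>*"
proof (cases "\<exists>r\<in>insert b R. (r, a) \<in> (tadj E)\<^sup>*")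
  case True
  have "\<exists>r\<in>insert b R. (r, x) \<in> (tadj E)\<^sup>*" if x: "x \<in> V" for x
  proof -
    obtain r where r: "r \<in> R" "(r, x) \<in> (tadj (insert {a, b} E))\<^sup>*" using bspec[OF assms x] by blast
    from rtrancl_tadj_insert_cases[OF r(2)] True r(1) show ?thesis
      by (meson insertI1 insertI2 rtrancl_trans)
  qed
  then show ?thesis using that by blast
next
  case False
  have "\<exists>r\<in>insert a R. (r, x) \<in> (tadj E)\<^sup>*" if x: "x \<in> V" for x
  proof -
    obtain r where r: "r \<in> R" "(r, x) \<in> (tadj (insert {a, b} E))\<^sup>*" using bspec[OF assms x] by blast
    from rtrancl_tadj_insert_cases[OF r(2)] False r(1) show ?thesis by blast
  qed
  then show ?thesis using that by blast
qed

text \<open>Each edge can connect at most one new vertex to the vertices reachable from the roots.\<close>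
lemma card_reachable_le:
  assumes "finite E" "finite R" "\<forall>x\<in>V. \<exists>r\<in>R. (r, x) \<in> (tadj E)\<^sup>*"
  shows "card V \<le> card E + card R"
  using assms
proof (induction E arbitrary: R rule: finite_induct)
  case empty
  have "tadj {} = {}" unfolding tadj_def by auto
  then have "V \<subseteq> R" using empty by auto
  then show ?case using card_mono empty by auto
next
  case (insert e F)
  show ?case
  proof (cases "\<exists>a b. e = {a, b}")
    case False
    then have "tadj (insert e F) = tadj F" unfolding tadj_def by auto
    then have "card V \<le> card F + card R" using insert by simp
    then show ?thesis using insert by simp
  next
    case True
    then obtain a b where "e = {a, b}" by blast
    then obtain c where "\<forall>x\<in>V. \<exists>r\<in>insert c R. (r, x) \<in> (tadj F)\<^sup>*"
      using reachable_without_edge insert.prems by metis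
    then have "card V \<le> card F + card (insert c R)" using insert by auto
    moreover have "card (insert c R) \<le> Suc (card R)" by (simp add: card_insert_le_m1)
    ultimately show ?thesis using insert by simp
  qed
qed

lemma tree_edgeE:
  assumes "is_tree N TE" "e \<in> TE"
  obtains u v where "u \<in> N" "v \<in> N" "u \<noteq> v" "e = {u, v}"
  using assms unfolding is_tree_def by blast

lemma tree_edge_nodes:
  assumes "is_tree N TE" "{u, v} \<in> TE"
  shows "u \<in> N" "v \<in> N" "u \<noteq> v"
  using assms by (auto elim!: tree_edgeE simp: doubleton_eq_iff)

lemma finite_tree_nodes: "is_tree N TE \<Longrightarrow> finite N"
  unfolding is_tree_def by simp

lemma finite_tree_edges: "is_tree N TE \<Longrightarrow> finite TE"
proof -
  assume t: "is_tree N TE"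
  then have "TE \<subseteq> Pow N" by (auto elim: tree_edgeE)
  then show ?thesis using finite_tree_nodes[OF t] by (meson finite_Pow_iff finite_subset)
qed

lemma tree_connected: "is_tree N TE \<Longrightarrow> u \<in> N \<Longrightarrow> v \<in> N \<Longrightarrow> (u, v) \<in> (tadj TE)\<^sup>*"
  unfolding is_tree_def by blast

lemma tdeg_outside_tree:
  assumes "is_tree N TE" "u \<notin> N"
  shows "tdeg TE u = 0"
proof -
  have "{e \<in> TE. u \<in> e} = {}" using assms by (auto elim: tree_edgeE)
  then show ?thesis unfolding tdeg_def by (metis card.empty)
qed

text \<open>Otherwise all nodes stay reachable from \<open>w\<close> without the edge,
  and \<open>card_reachable_le\<close> contradicts \<open>card TE = card N - 1\<close>.\<close>
lemma tree_edge_bridge: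
  assumes t: "is_tree N TE" and e: "{u, w} \<in> TE"
  shows "(w, u) \<notin> (tadj (TE - {{u, w}}))\<^sup>*"
proof
  assume wu: "(w, u) \<in> (tadj (TE - {{u, w}}))\<^sup>*"
  let ?E = "TE - {{u, w}}"
  have TE: "TE = insert {u, w} ?E" using e by auto
  have wN: "w \<in> N" using tree_edge_nodes[OF t e] by simp
  have "\<forall>x\<in>N. \<exists>r\<in>{w}. (r, x) \<in> (tadj ?E)\<^sup>*"
  proof
    fix x assume "x \<in> N"
    then have "(w, x) \<in> (tadj (insert {u, w} ?E))\<^sup>*" using tree_connected[OF t wN] TE by simp
    from rtrancl_tadj_insert_cases[OF this] wu show "\<exists>r\<in>{w}. (r, x) \<in> (tadj ?E)\<^sup>*"
      by (meson rtrancl_trans singletonI)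
  qed
  then have "card N \<le> card ?E + 1"
    using card_reachable_le[of ?E "{w}" N] finite_tree_edges[OF t] by simp
  moreover have "card ?E = card TE - 1" using e finite_tree_edges[OF t] by simp
  moreover have "card TE = card N - 1" using t unfolding is_tree_def by simp
  moreover have "card TE \<ge> 1"
    using e finite_tree_edges[OF t] by (metis One_nat_def Suc_leI card_gt_0_iff empty_iff)
  ultimately show False by simp
qed

lemma tside_self [simp]: "u \<in> tside TE e u"
  unfolding tside_def by simp

lemma tside_step:
  assumes "y \<in> tside TE e w" "{y, z} \<in> TE"
  shows "z \<in> e \<union> tside TE e w"
proof (cases "{y, z} = e")
  case False
  then show ?thesis using assms unfolding tside_def by (simp add: rtrancl.rtrancl_into_rtrancl)
qed auto

lemma tside_subset:
  assumes t: "is_tree N TE" and u: "u \<in> N"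
  shows "tside TE e u \<subseteq> N"
proof
  fix x assume "x \<in> tside TE e u"
  then have "(u, x) \<in> (tadj (TE - {e}))\<^sup>*" unfolding tside_def by simp
  then show "x \<in> N"
    by (induction rule: rtrancl_induct) (use u tree_edge_nodes[OF t] in auto)
qed

lemma finite_tside: "is_tree N TE \<Longrightarrow> u \<in> N \<Longrightarrow> finite (tside TE e u)"
  using tside_subset finite_tree_nodes finite_subset by metis

lemma tside_excludes_other_end: "is_tree N TE \<Longrightarrow> {u, w} \<in> TE \<Longrightarrow> u \<notin> tside TE {u, w} w"
  using tree_edge_bridge unfolding tside_def by blast

lemma leaf_edges:
  assumes t: "is_tree N TE" and e: "{u, v} \<in> TE" and d: "tdeg TE u \<le> 1"
  shows "{e \<in> TE. u \<in> e} = {{u, v}}"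
proof -
  let ?S = "{e \<in> TE. u \<in> e}"
  have "finite ?S" using finite_tree_edges[OF t] by simp
  moreover have "card ?S \<le> Suc 0" using d unfolding tdeg_def by simp
  moreover have "{u, v} \<in> ?S" using e by simp
  moreover have "card ?S \<noteq> 0" using \<open>finite ?S\<close> \<open>{u, v} \<in> ?S\<close> by auto
  ultimately have "card ?S = 1" by linarith
  then obtain x where "?S = {x}" by (rule card_1_singletonE)
  then show ?thesis using \<open>{u, v} \<in> ?S\<close> by simp
qed

lemma tside_leaf:
  assumes t: "is_tree N TE" and e: "{u, v} \<in> TE" and d: "tdeg TE u \<le> 1"
  shows "tside TE {u, v} u = {u}"
proof -
  have "x = u" if "(u, x) \<in> (tadj (TE - {{u, v}}))\<^sup>*" for x
    using that
  proof (induction rule: rtrancl_induct)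
    case (step y z)
    then have "{u, z} \<in> {e \<in> TE. u \<in> e}" "{u, z} \<noteq> {u, v}" by auto
    then show ?case using leaf_edges[OF t e d] by simp
  qed simp
  then show ?thesis unfolding tside_def by auto
qed

lemma cubic_node_neighbours:
  assumes t: "is_tree N TE" and e: "{u, v} \<in> TE" and d: "tdeg TE u = 3"
  obtains w1 w2 where "{u, w1} \<in> TE" "{u, w2} \<in> TE" "w1 \<noteq> v" "w2 \<noteq> v" "w1 \<noteq> u" "w2 \<noteq> u"
    "\<forall>e\<in>TE. u \<in> e \<longrightarrow> e = {u, v} \<or> e = {u, w1} \<or> e = {u, w2}"
proof -
  let ?S = "{e \<in> TE. u \<in> e}"
  have "card ?S = 3" using d unfolding tdeg_def .
  moreover have "{u, v} \<in> ?S" using e by simp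
  ultimately have "card (?S - {{u, v}}) = 2" by simp
  then obtain e2 e3 where e23: "?S - {{u, v}} = {e2, e3}" by (meson card_2_iff)
  have other_end: "\<exists>w. e' = {u, w} \<and> w \<noteq> u \<and> w \<noteq> v" if "e' \<in> ?S - {{u, v}}" for e'
    using that by (auto elim!: tree_edgeE[OF t] simp: insert_commute)
  obtain w1 w2 where w: "e2 = {u, w1}" "w1 \<noteq> u" "w1 \<noteq> v" "e3 = {u, w2}" "w2 \<noteq> u" "w2 \<noteq> v"
    using other_end e23 by (metis insertCI)
  have "{u, w1} \<in> TE" "{u, w2} \<in> TE" using e23 w(1,4) by blast+
  moreover have "\<forall>e\<in>TE. u \<in> e \<longrightarrow> e = {u, v} \<or> e = {u, w1} \<or> e = {u, w2}"
    using e23 w(1,4) by blast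
  ultimately show ?thesis using that w by blast
qed

lemma tside_cubic_split:
  assumes t: "is_tree N TE" and e: "{u, v} \<in> TE" and w: "w1 \<noteq> u" "w2 \<noteq> u"
    and nbrs: "\<forall>e\<in>TE. u \<in> e \<longrightarrow> e = {u, v} \<or> e = {u, w1} \<or> e = {u, w2}"
  shows "tside TE {u, v} u \<subseteq> {u} \<union> tside TE {u, w1} w1 \<union> tside TE {u, w2} w2"
proof
  fix x assume "x \<in> tside TE {u, v} u"
  then have "(u, x) \<in> (tadj (TE - {{u, v}}))\<^sup>*" unfolding tside_def by simp
  then show "x \<in> {u} \<union> tside TE {u, w1} w1 \<union> tside TE {u, w2} w2"
  proof (induction rule: rtrancl_induct)
    case (step y z)
    have yz: "{y, z} \<in> TE" "{y, z} \<noteq> {u, v}" using step.hyps(2) by auto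
    consider "y = u" | "y \<in> tside TE {u, w1} w1" | "y \<in> tside TE {u, w2} w2"
      using step.IH by blast
    then show ?case
    proof cases
      case 1
      then have uz: "{u, z} \<in> TE" "{u, z} \<noteq> {u, v}" using yz by auto
      have "u \<in> {u, z} \<longrightarrow> {u, z} = {u, v} \<or> {u, z} = {u, w1} \<or> {u, z} = {u, w2}"
        using nbrs uz(1) by (rule bspec)
      then have "{u, z} = {u, w1} \<or> {u, z} = {u, w2}" using uz(2) by blast
      then have "z = w1 \<or> z = w2" using w by (auto simp: doubleton_eq_iff)
      then show ?thesis by auto
    next
      case 2
      then show ?thesis using tside_step[OF 2 yz(1)] by auto
    next
      case 3
      then show ?thesis using tside_step[OF 3 yz(1)] by auto
    qed
  qed simp
qed

lemma tside_branch_subset: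
  assumes t: "is_tree N TE" and e1: "{u, w} \<in> TE" and w: "w \<noteq> v"
  shows "tside TE {u, w} w \<subseteq> tside TE {u, v} u"
proof
  fix x assume "x \<in> tside TE {u, w} w"
  then have "(w, x) \<in> (tadj (TE - {{u, w}}))\<^sup>*" unfolding tside_def by simp
  then have "(u, x) \<in> (tadj (TE - {{u, v}}))\<^sup>*"
  proof (induction rule: rtrancl_induct)
    case base
    have "{u, w} \<noteq> {u, v}" using w by (auto simp: doubleton_eq_iff)
    then show ?case using e1 by (simp add: r_into_rtrancl)
  next
    case (step y z)
    have bridge: "(w, u) \<notin> (tadj (TE - {{u, w}}))\<^sup>*" using tree_edge_bridge[OF t e1] .
    have "y \<noteq> u" using step.hyps(1) bridge by blast
    moreover have "\<not> (y = v \<and> z = u)"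
      using step.hyps bridge by (meson rtrancl.rtrancl_into_rtrancl)
    ultimately have "{y, z} \<noteq> {u, v}" by (auto simp: doubleton_eq_iff)
    then have "(y, z) \<in> tadj (TE - {{u, v}})" using step.hyps(2) by simp
    then show ?case using step.IH by (simp add: rtrancl.rtrancl_into_rtrancl)
  qed
  then show "x \<in> tside TE {u, v} u" unfolding tside_def by simp
qed

lemma heavy_branch:
  assumes t: "is_tree N TE" and deg: "\<forall>u\<in>N. tdeg TE u \<le> 1 \<or> tdeg TE u = 3"
    and L2: "2 \<le> card (tleaves N TE)" and e: "{u, v} \<in> TE"
    and heavy: "2 * card (tleaves N TE) < 3 * card (tleaves N TE \<inter> tside TE {u, v} u)"
  obtains w where "{u, w} \<in> TE" "w \<noteq> v"
    "card (tleaves N TE) \<le> 3 * card (tleaves N TE \<inter> tside TE {u, w} w)"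
proof -
  define L where "L = tleaves N TE"
  define s where "s w = card (L \<inter> tside TE {u, w} w)" for w
  have uN: "u \<in> N" using tree_edge_nodes[OF t e] by simp
  have d3: "tdeg TE u = 3"
  proof (rule ccontr)
    assume "tdeg TE u \<noteq> 3"
    then have "tside TE {u, v} u = {u}" using deg uN tside_leaf[OF t e] by auto
    then have "card (L \<inter> tside TE {u, v} u) \<le> 1" by (simp add: card_le_Suc0_iff_eq)
    then show False using heavy L2 unfolding L_def by simp
  qed
  obtain w1 w2 where w: "{u, w1} \<in> TE" "{u, w2} \<in> TE" "w1 \<noteq> v" "w2 \<noteq> v" "w1 \<noteq> u" "w2 \<noteq> u"
    "\<forall>e\<in>TE. u \<in> e \<longrightarrow> e = {u, v} \<or> e = {u, w1} \<or> e = {u, w2}"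
    using cubic_node_neighbours[OF t e d3] by blast
  have "u \<notin> L" using d3 unfolding L_def tleaves_def by simp
  then have "L \<inter> tside TE {u, v} u \<subseteq> (L \<inter> tside TE {u, w1} w1) \<union> (L \<inter> tside TE {u, w2} w2)"
    using tside_cubic_split[OF t e w(5,6,7)] by blast
  then have "card (L \<inter> tside TE {u, v} u) \<le> s w1 + s w2" unfolding s_def
    using finite_tside[OF t tree_edge_nodes(2)[OF t w(1)]]
      finite_tside[OF t tree_edge_nodes(2)[OF t w(2)]]
    by (meson card_Un_le card_mono finite_Int finite_UnI le_trans)
  then have "card L \<le> 3 * s w1 \<or> card L \<le> 3 * s w2" using heavy unfolding L_def by linarith
  then show ?thesis using that w unfolding s_def L_def by blast
qed

text \<open>Walking from a heavy side towards its heavier branch, the side shrinks until it is balanced.\<close>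
lemma heavy_side_descent:
  assumes t: "is_tree N TE" and deg: "\<forall>u\<in>N. tdeg TE u \<le> 1 \<or> tdeg TE u = 3"
    and L2: "2 \<le> card (tleaves N TE)"
    and e: "{u, v} \<in> TE"
    and heavy: "card (tleaves N TE) \<le> 3 * card (tleaves N TE \<inter> tside TE {u, v} u)"
  shows "\<exists>u v. {u, v} \<in> TE \<and> card (tleaves N TE) \<le> 3 * card (tleaves N TE \<inter> tside TE {u, v} u)
     \<and> 3 * card (tleaves N TE \<inter> tside TE {u, v} u) \<le> 2 * card (tleaves N TE)"
  using e heavy
proof (induction "card (tside TE {u, v} u)" arbitrary: u v rule: less_induct)
  case less
  show ?case
  proof (cases "3 * card (tleaves N TE \<inter> tside TE {u, v} u) \<le> 2 * card (tleaves N TE)")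
    case True
    then show ?thesis using less.prems by blast
  next
    case False
    then have "2 * card (tleaves N TE) < 3 * card (tleaves N TE \<inter> tside TE {u, v} u)" by simp
    then obtain w where ew: "{u, w} \<in> TE" "w \<noteq> v"
      and big: "card (tleaves N TE) \<le> 3 * card (tleaves N TE \<inter> tside TE {u, w} w)"
      by (rule heavy_branch[OF t deg L2 less.prems(1)])
    have "tside TE {u, w} w \<subset> tside TE {u, v} u"
      using tside_branch_subset[OF t ew] tside_excludes_other_end[OF t ew(1)] tside_self by blast
    then have "card (tside TE {w, u} w) < card (tside TE {u, v} u)"
      using finite_tside[OF t tree_edge_nodes(1)[OF t less.prems(1)]]
      by (simp add: insert_commute psubset_card_mono)
    moreover have "{w, u} \<in> TE" using ew by (simp add: insert_commute)
    moreover have "card (tleaves N TE) \<le> 3 * card (tleaves N TE \<inter> tside TE {w, u} w)"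
      using big by (simp add: insert_commute)
    ultimately show ?thesis using less.hyps by blast
  qed
qed

lemma tside_beyond_leaf:
  assumes t: "is_tree N TE" and e: "{l, p} \<in> TE" and d: "tdeg TE l \<le> 1"
  shows "N \<subseteq> insert l (tside TE {p, l} p)"
proof
  fix x assume "x \<in> N"
  then have "(p, x) \<in> (tadj TE)\<^sup>*" using tree_connected[OF t] tree_edge_nodes[OF t e] by blast
  then show "x \<in> insert l (tside TE {p, l} p)"
  proof (induction rule: rtrancl_induct)
    case (step y z)
    then have yz: "{y, z} \<in> TE" by simp
    from step.IH show ?case
    proof
      assume "y = l"
      then have "{y, z} \<in> {e \<in> TE. l \<in> e}" using yz by simp
      then have "{y, z} = {l, p}" by (simp add: leaf_edges[OF t e d])
      then show ?thesis using \<open>y = l\<close> by (auto simp: doubleton_eq_iff)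
    next
      assume "y \<in> tside TE {p, l} p"
      then show ?thesis using tside_step[OF _ yz, of "{p, l}" p] by auto
    qed
  qed simp
qed

lemma balanced_tree_edge:
  assumes t: "is_tree N TE" and deg: "\<forall>u\<in>N. tdeg TE u \<le> 1 \<or> tdeg TE u = 3"
    and L2: "2 \<le> card (tleaves N TE)"
  shows "\<exists>u v. {u, v} \<in> TE \<and> card (tleaves N TE) \<le> 3 * card (tleaves N TE \<inter> tside TE {u, v} u)
     \<and> 3 * card (tleaves N TE \<inter> tside TE {u, v} u) \<le> 2 * card (tleaves N TE)"
proof -
  define L where "L = tleaves N TE"
  have LN: "L \<subseteq> N" unfolding L_def tleaves_def by auto
  have "finite L" using L2 card.infinite unfolding L_def by fastforce
  then obtain l l' where l: "l \<in> L" "l' \<in> L" "l \<noteq> l'"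
    using L2 card_le_Suc0_iff_eq unfolding L_def by (metis One_nat_def not_less_eq_eq numeral_2_eq_2)
  have "(l, l') \<in> (tadj TE)\<^sup>*" using tree_connected[OF t] l LN by blast
  then obtain p where "(l, p) \<in> tadj TE" using l(3) by (metis converse_rtranclE)
  then have e: "{l, p} \<in> TE" by simp
  have d: "tdeg TE l \<le> 1" using l unfolding L_def tleaves_def by simp
  have "L - {l} \<subseteq> L \<inter> tside TE {p, l} p" using tside_beyond_leaf[OF t e d] LN by blast
  then have "card L - 1 \<le> card (L \<inter> tside TE {p, l} p)"
    using \<open>finite L\<close> by (metis card_Diff_singleton card_mono finite_Int l(1))
  then have "card L \<le> 3 * card (L \<inter> tside TE {p, l} p)" using L2 unfolding L_def by linarith
  moreover have "{p, l} \<in> TE" using e by (simp add: insert_commute)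
  ultimately show ?thesis using heavy_side_descent[OF t deg L2] unfolding L_def by blast
qed

lemma tdeg_insert_edge:
  assumes "finite TE" "e \<notin> TE"
  shows "tdeg (insert e TE) x = tdeg TE x + (if x \<in> e then 1 else 0)"
proof (cases "x \<in> e")
  case True
  then have "{e' \<in> insert e TE. x \<in> e'} = insert e {e' \<in> TE. x \<in> e'}" by auto
  then show ?thesis using assms True unfolding tdeg_def by simp
next
  case False
  then have "{e' \<in> insert e TE. x \<in> e'} = {e' \<in> TE. x \<in> e'}" by auto
  then show ?thesis using False unfolding tdeg_def by simp
qed

lemma is_tree_add_leaf:
  assumes t: "is_tree N TE" and l: "l \<in> N" and a: "a \<notin> N"
  shows "is_tree (insert a N) (insert {l, a} TE)"
proof -
  let ?TE = "insert {l, a} TE"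
  have new: "{l, a} \<notin> TE" using tree_edge_nodes(2)[OF t] a by blast
  have from_l: "(l, x) \<in> (tadj ?TE)\<^sup>*" if "x \<in> insert a N" for x
  proof (cases "x = a")
    case True
    then show ?thesis by (simp add: r_into_rtrancl)
  next
    case False
    then show ?thesis
      using that tree_connected[OF t l] rtrancl_tadj_mono[of TE ?TE] by blast
  qed
  have "card ?TE = card N"
    using new finite_tree_edges[OF t] t l unfolding is_tree_def by (simp add: card_gt_0_iff)
  moreover have "\<forall>e\<in>?TE. \<exists>u v. u \<in> insert a N \<and> v \<in> insert a N \<and> u \<noteq> v \<and> e = {u, v}"
    using t l a unfolding is_tree_def by blast
  moreover have "\<forall>u\<in>insert a N. \<forall>v\<in>insert a N. (u, v) \<in> (tadj ?TE)\<^sup>*"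
    using from_l rtrancl_tadj_sym rtrancl_trans by metis
  ultimately show ?thesis
    using finite_tree_nodes[OF t] a unfolding is_tree_def by simp
qed

lemma is_tree_single_edge: "is_tree {0::nat, 1} {{0, 1}}"
proof -
  have "tadj {{0::nat, 1}} = {(0, 1), (1, 0)}" unfolding tadj_def by (auto simp: doubleton_eq_iff)
  then show ?thesis unfolding is_tree_def by auto
qed

lemma attach_two_leaves:
  assumes t: "is_tree N TE" and l: "l \<in> N" and ab: "a \<notin> N" "b \<notin> N" "a \<noteq> b"
  defines "TE' \<equiv> insert {l, b} (insert {l, a} TE)"
  shows "is_tree (insert b (insert a N)) TE'"
    and "tdeg TE' x = tdeg TE x + (if x = l then 2 else if x = a \<or> x = b then 1 else 0)"
proof -
  have t1: "is_tree (insert a N) (insert {l, a} TE)" using is_tree_add_leaf[OF t l ab(1)] .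
  have "b \<notin> insert a N" using ab by simp
  then show "is_tree (insert b (insert a N)) TE'"
    unfolding TE'_def by (rule is_tree_add_leaf[OF t1 insertI2[OF l]])
  have new1: "{l, a} \<notin> TE" using tree_edge_nodes(2)[OF t] ab(1) by blast
  have new2: "{l, b} \<notin> insert {l, a} TE" using tree_edge_nodes(2)[OF t1] ab by blast
  have "l \<noteq> a" "l \<noteq> b" using l ab by auto
  then show "tdeg TE' x = tdeg TE x + (if x = l then 2 else if x = a \<or> x = b then 1 else 0)"
    unfolding TE'_def using tdeg_insert_edge[OF finite_tree_edges[OF t1] new2, of x]
      tdeg_insert_edge[OF finite_tree_edges[OF t] new1, of x] by auto
qed

lemma cubic_tree_grow:
  assumes t: "is_tree N TE" and deg: "\<forall>u\<in>N. tdeg TE u = 1 \<or> tdeg TE u = 3"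
    and l: "l \<in> tleaves N TE"
  shows "\<exists>N' TE'. is_tree N' TE' \<and> (\<forall>u\<in>N'. tdeg TE' u = 1 \<or> tdeg TE' u = 3)
     \<and> card (tleaves N' TE') = Suc (card (tleaves N TE))"
proof -
  have fin: "finite N" using t by (rule finite_tree_nodes)
  obtain a where aN: "a \<notin> N" using ex_new_if_finite[OF infinite_UNIV_nat fin] by blast
  obtain b where bN: "b \<notin> insert a N" using ex_new_if_finite[OF infinite_UNIV_nat] fin by blast
  let ?TE' = "insert {l, b} (insert {l, a} TE)" and ?N' = "insert b (insert a N)"
  have lN: "l \<in> N" and dl: "tdeg TE l = 1" using l deg unfolding tleaves_def by auto
  note grown = attach_two_leaves[OF t lN aN _ _, of b]
  have ab: "a \<noteq> l" "b \<noteq> l" "a \<noteq> b" using aN bN lN by auto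
  have "tdeg TE a = 0" "tdeg TE b = 0" using tdeg_outside_tree[OF t] aN bN by auto
  then have degs: "tdeg ?TE' x = (if x = l then 3 else if x = a \<or> x = b then 1 else tdeg TE x)" for x
    using grown(2)[of x] bN dl by auto
  have leaves: "tleaves ?N' ?TE' = insert a (insert b (tleaves N TE - {l}))"
    unfolding tleaves_def using degs ab by auto
  have "a \<notin> tleaves N TE" "b \<notin> tleaves N TE" using aN bN unfolding tleaves_def by auto
  moreover have finL: "finite (tleaves N TE)" using fin unfolding tleaves_def by simp
  ultimately have "card (insert a (insert b (tleaves N TE - {l}))) = card (tleaves N TE - {l}) + 2"
    using ab by simp
  moreover have "card (tleaves N TE - {l}) = card (tleaves N TE) - 1" using l by simp
  moreover have "0 < card (tleaves N TE)" using l finL card_gt_0_iff by blast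
  ultimately have "card (tleaves ?N' ?TE') = Suc (card (tleaves N TE))" unfolding leaves by linarith
  moreover have "\<forall>u\<in>?N'. tdeg ?TE' u = 1 \<or> tdeg ?TE' u = 3" using degs deg by auto
  ultimately show ?thesis using grown(1) bN by blast
qed

lemma cubic_tree_exists:
  assumes "2 \<le> M"
  shows "\<exists>N TE. is_tree N TE \<and> (\<forall>u\<in>N. tdeg TE u = 1 \<or> tdeg TE u = 3) \<and> card (tleaves N TE) = M"
  using assms
proof (induction M rule: nat_induct_at_least)
  case base
  have "{e \<in> {{0::nat, 1}}. 0 \<in> e} = {{0, 1}}" "{e \<in> {{0::nat, 1}}. 1 \<in> e} = {{0, 1}}" by auto
  then have "tdeg {{0::nat, 1}} 0 = 1" "tdeg {{0::nat, 1}} 1 = 1" unfolding tdeg_def by simp_all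
  moreover from this have "tleaves {0::nat, 1} {{0, 1}} = {0, 1}" unfolding tleaves_def by auto
  ultimately show ?case using is_tree_single_edge by (intro exI[of _ "{0, 1}"] exI[of _ "{{0, 1}}"]) simp
next
  case (Suc M)
  then obtain N TE where "is_tree N TE" "\<forall>u\<in>N. tdeg TE u = 1 \<or> tdeg TE u = 3"
    "card (tleaves N TE) = M" by blast
  moreover then obtain l where "l \<in> tleaves N TE" using Suc.hyps by fastforce
  ultimately show ?case using cubic_tree_grow by metis
qed

section \<open>Rank-decompositions\<close>

lemma rank_decomp_exists:
  assumes "finite (fst G)" "2 \<le> card (fst G)"
  obtains N TE lam where "is_rank_decomp G N TE lam"
proof -
  obtain N TE where t: "is_tree N TE" "\<forall>u\<in>N. tdeg TE u = 1 \<or> tdeg TE u = 3"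
      "card (tleaves N TE) = card (fst G)"
    using cubic_tree_exists[OF assms(2)] by blast
  have "finite (tleaves N TE)" using finite_tree_nodes[OF t(1)] unfolding tleaves_def by simp
  then obtain lam where "bij_betw lam (tleaves N TE) (fst G)"
    using finite_same_card_bij assms(1) t(3) by blast
  then show ?thesis using that t(1,2) unfolding is_rank_decomp_def by force
qed

lemma cutrank_le_decomp_width:
  assumes t: "is_tree N TE" and e: "{u, v} \<in> TE"
  shows "cutrank G (lam ` (tleaves N TE \<inter> tside TE {u, v} u)) \<le> decomp_width G N TE lam"
proof -
  let ?cr = "\<lambda>(u, v). cutrank G (lam ` (tleaves N TE \<inter> tside TE {u, v} u))"
  have "{cutrank G (lam ` (tleaves N TE \<inter> tside TE {u, v} u)) | u v. {u, v} \<in> TE} \<subseteq> ?cr ` (N \<times> N)"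
    using tree_edge_nodes[OF t] by fastforce
  then have "finite {cutrank G (lam ` (tleaves N TE \<inter> tside TE {u, v} u)) | u v. {u, v} \<in> TE}"
    using finite_tree_nodes[OF t] finite_subset by blast
  then show ?thesis unfolding decomp_width_def using e by (intro Max_ge) blast+
qed

lemma rankwidth_geI:
  assumes fin: "finite (fst G)" and two: "2 \<le> card (fst G)"
    and balanced: "\<And>A. A \<subseteq> fst G \<Longrightarrow> card (fst G) \<le> 3 * card A \<Longrightarrow> 3 * card A \<le> 2 * card (fst G)
      \<Longrightarrow> n \<le> cutrank G A"
  shows "n \<le> rankwidth G"
proof -
  let ?P = "\<lambda>w. \<exists>N TE lam. is_rank_decomp G N TE lam \<and> decomp_width G N TE lam \<le> w"
  obtain N0 TE0 lam0 where "is_rank_decomp G N0 TE0 lam0" using rank_decomp_exists[OF fin two] .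
  then have "?P (rankwidth G)" unfolding rankwidth_def by (intro LeastI) blast
  then obtain N TE lam where d: "is_rank_decomp G N TE lam" and w: "decomp_width G N TE lam \<le> rankwidth G"
    by blast
  have t: "is_tree N TE" and deg: "\<forall>u\<in>N. tdeg TE u \<le> 1 \<or> tdeg TE u = 3"
    and bij: "bij_betw lam (tleaves N TE) (fst G)" using d unfolding is_rank_decomp_def by auto
  have cL: "card (tleaves N TE) = card (fst G)" using bij by (rule bij_betw_same_card)
  obtain u v where e: "{u, v} \<in> TE"
    and b: "card (tleaves N TE) \<le> 3 * card (tleaves N TE \<inter> tside TE {u, v} u)"
      "3 * card (tleaves N TE \<inter> tside TE {u, v} u) \<le> 2 * card (tleaves N TE)"
    using balanced_tree_edge[OF t deg] two cL by auto
  let ?A = "lam ` (tleaves N TE \<inter> tside TE {u, v} u)"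
  have "inj_on lam (tleaves N TE \<inter> tside TE {u, v} u)"
    using bij unfolding bij_betw_def by (meson inf_le1 inj_on_subset)
  then have "card ?A = card (tleaves N TE \<inter> tside TE {u, v} u)" by (rule card_image)
  moreover have "?A \<subseteq> fst G" using bij unfolding bij_betw_def by blast
  ultimately have "n \<le> cutrank G ?A" using balanced b cL by simp
  also have "\<dots> \<le> decomp_width G N TE lam" by (rule cutrank_le_decomp_width[OF t e])
  finally show ?thesis using w by simp
qed

section \<open>Cut-rank and nonsingular submatrices\<close>

text \<open>The rows \<open>I\<close> of the 0/1-matrix \<open>P\<close> restricted to the columns \<open>C\<close> are linearly independent
  over GF(2): no nonempty set of them sums to zero.\<close>
definition rows_independent :: "'a set \<Rightarrow> 'b set \<Rightarrow> ('a \<Rightarrow> 'b \<Rightarrow> bool) \<Rightarrow> bool" where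
  "rows_independent I C P \<longleftrightarrow> (\<forall>J \<subseteq> I. J \<noteq> {} \<longrightarrow> (\<exists>j\<in>C. odd (card {i \<in> J. P i j})))"

lemma cutrank_ge_card_rows:
  assumes "finite A" "R \<subseteq> A" "rows_independent R (fst G - A) (\<lambda>t c. {t, c} \<in> snd G)"
  shows "card R \<le> cutrank G A"
proof -
  let ?S = "{card S | S. S \<subseteq> A \<and> (\<forall>T. T \<subseteq> S \<and> T \<noteq> {} \<longrightarrow>
        (\<exists>c \<in> fst G - A. odd (card {t \<in> T. {t, c} \<in> snd G})))}"
  have "?S \<subseteq> card ` Pow A" by blast
  then have "finite ?S" using assms(1) finite_subset by blast
  moreover have "card R \<in> ?S" using assms(2,3) unfolding rows_independent_def by blast
  ultimately show ?thesis unfolding cutrank_def by (rule Max_ge)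
qed

lemma cutrank_ge_submatrix:
  assumes "finite A" and r: "r ` I \<subseteq> A" "inj_on r I" and c: "c ` I \<subseteq> fst G - A"
    and adj: "\<And>i j. i \<in> I \<Longrightarrow> j \<in> I \<Longrightarrow> {r i, c j} \<in> snd G \<longleftrightarrow> P i j"
    and indep: "rows_independent I I P"
  shows "card I \<le> cutrank G A"
proof -
  have "rows_independent (r ` I) (fst G - A) (\<lambda>t c. {t, c} \<in> snd G)"
    unfolding rows_independent_def
  proof (intro allI impI)
    fix T assume T: "T \<subseteq> r ` I" "T \<noteq> {}"
    define J where "J = {i \<in> I. r i \<in> T}"
    have TJ: "T = r ` J" and J: "J \<subseteq> I" "J \<noteq> {}" unfolding J_def using T by blast+
    obtain j where j: "j \<in> I" "odd (card {i \<in> J. P i j})"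
      using indep J unfolding rows_independent_def by blast
    have eq: "{t \<in> T. {t, c j} \<in> snd G} = r ` {i \<in> J. P i j}"
      unfolding TJ using adj j(1) J(1) by blast
    have "inj_on r {i \<in> J. P i j}" by (rule inj_on_subset[OF r(2)]) (use J(1) in blast)
    then have "card {t \<in> T. {t, c j} \<in> snd G} = card {i \<in> J. P i j}" unfolding eq by (rule card_image)
    then have "odd (card {t \<in> T. {t, c j} \<in> snd G})" using j(2) by simp
    moreover have "c j \<in> fst G - A" using c j(1) by blast
    ultimately show "\<exists>c\<in>fst G - A. odd (card {t \<in> T. {t, c} \<in> snd G})" by blast
  qed
  then have "card (r ` I) \<le> cutrank G A" using cutrank_ge_card_rows assms(1) r(1) by blast
  then show ?thesis using card_image[OF r(2)] by simp
qed

lemma rows_independent_cong: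
  assumes "rows_independent I C P" "\<And>i j. i \<in> I \<Longrightarrow> j \<in> C \<Longrightarrow> P i j \<longleftrightarrow> Q i j"
  shows "rows_independent I C Q"
  unfolding rows_independent_def
proof (intro allI impI)
  fix J assume J: "J \<subseteq> I" "J \<noteq> {}"
  then obtain j where "j \<in> C" "odd (card {i \<in> J. P i j})"
    using assms(1) unfolding rows_independent_def by blast
  moreover have "{i \<in> J. P i j} = {i \<in> J. Q i j}" using assms(2) J(1) \<open>j \<in> C\<close> by blast
  ultimately show "\<exists>j\<in>C. odd (card {i \<in> J. Q i j})" by auto
qed

lemma rows_independent_eq: "rows_independent I I (=)"
  unfolding rows_independent_def
proof (intro allI impI)
  fix J assume "J \<subseteq> I" "J \<noteq> {}"
  then obtain j where "j \<in> J" "j \<in> I" by blast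
  moreover then have "{i \<in> J. i = j} = {j}" by blast
  ultimately show "\<exists>j\<in>I. odd (card {i \<in> J. i = j})" by (intro bexI[of _ j]) simp_all
qed

lemma rows_independent_le:
  fixes I :: "'a :: linorder set"
  assumes "finite I"
  shows "rows_independent I I (\<le>)"
  unfolding rows_independent_def
proof (intro allI impI)
  fix J assume J: "J \<subseteq> I" "J \<noteq> {}"
  then have fJ: "finite J" using assms finite_subset by blast
  have "{i \<in> J. i \<le> Min J} = {Min J}" using Min_le[OF fJ] Min_in[OF fJ] J by (auto intro: antisym)
  moreover have "Min J \<in> I" using Min_in[OF fJ] J by blast
  ultimately show "\<exists>j\<in>I. odd (card {i \<in> J. i \<le> j})" by (intro bexI[of _ "Min J"]) simp_all
qed

lemma rows_independent_ge:
  fixes I :: "'a :: linorder set"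
  assumes "finite I"
  shows "rows_independent I I (\<ge>)"
  unfolding rows_independent_def
proof (intro allI impI)
  fix J assume J: "J \<subseteq> I" "J \<noteq> {}"
  then have fJ: "finite J" using assms finite_subset by blast
  have "{i \<in> J. Max J \<le> i} = {Max J}" using Max_ge[OF fJ] Max_in[OF fJ] J by (auto intro: antisym)
  moreover have "Max J \<in> I" using Max_in[OF fJ] J by blast
  ultimately show "\<exists>j\<in>I. odd (card {i \<in> J. j \<le> i})" by (intro bexI[of _ "Max J"]) simp_all
qed

lemma rows_independent_neq:
  assumes fin: "finite I" and ev: "even (card I)"
  shows "rows_independent I I (\<noteq>)"
  unfolding rows_independent_def
proof (intro allI impI)
  fix J assume J: "J \<subseteq> I" "J \<noteq> {}"
  then have fJ: "finite J" using fin finite_subset by blast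
  show "\<exists>j\<in>I. odd (card {i \<in> J. i \<noteq> j})"
  proof (cases "even (card J)")
    case True
    obtain j where j: "j \<in> J" using J by blast
    have "{i \<in> J. i \<noteq> j} = J - {j}" by blast
    moreover have "card (J - {j}) = card J - 1" "card J \<noteq> 0" using j fJ by auto
    ultimately have "odd (card {i \<in> J. i \<noteq> j})" using True by simp
    then show ?thesis using j J by blast
  next
    case False
    then have "J \<noteq> I" using ev by blast
    then obtain j where j: "j \<in> I" "j \<notin> J" using J by blast
    then have "{i \<in> J. i \<noteq> j} = J" by blast
    then show ?thesis using j False by metis
  qed
qed

section \<open>Balanced cuts of the grid\<close>

text \<open>Column \<open>j\<close> of the grid is \<open>X\<^sup>j\<close>; row \<open>a\<close> consists of the vertices \<open>x\<^sup>j\<^sub>a\<close>.\<close>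
definition Xgrid :: "nat \<Rightarrow> qv set" where
  "Xgrid N = (\<lambda>(j, a). Xv j a) ` ({1..N} \<times> {1..N})"

definition near_column :: "nat \<Rightarrow> qv set" where
  "near_column j = {Xv p a | p a. p = j \<or> p + 1 = j}"

definition mixed_columns :: "qv set \<Rightarrow> nat \<Rightarrow> nat set" where
  "mixed_columns A N = {j \<in> {1..N}. (\<exists>a\<in>{1..N}. Xv j a \<in> A) \<and> (\<exists>b\<in>{1..N}. Xv j b \<notin> A)}"

definition mixed_rows :: "qv set \<Rightarrow> nat \<Rightarrow> nat set" where
  "mixed_rows A N = {a \<in> {1..N}. (\<exists>j\<in>{1..N}. Xv j a \<in> A) \<and> (\<exists>j\<in>{1..N}. Xv j a \<notin> A)}"

definition rows_switch_at :: "qv set \<Rightarrow> nat \<Rightarrow> nat set \<Rightarrow> bool" where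
  "rows_switch_at A t S \<longleftrightarrow> (\<forall>a\<in>S. Xv t a \<in> A \<and> Xv (t + 1) a \<notin> A) \<or> (\<forall>a\<in>S. Xv (t + 1) a \<in> A \<and> Xv t a \<notin> A)"

lemma Xv_in_Xgrid_iff [simp]: "Xv j a \<in> Xgrid N \<longleftrightarrow> j \<in> {1..N} \<and> a \<in> {1..N}"
  unfolding Xgrid_def by auto

lemma finite_Xgrid [simp]: "finite (Xgrid N)"
  unfolding Xgrid_def by simp

lemma card_Xgrid: "card (Xgrid N) = N * N"
  unfolding Xgrid_def by (subst card_image) (auto simp: inj_on_def card_cartesian_product)

lemma XgridE:
  assumes "x \<in> Xgrid N"
  obtains j a where "x = Xv j a" "j \<in> {1..N}" "a \<in> {1..N}"
  using assms unfolding Xgrid_def by auto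

lemma switch_point:
  fixes P :: "nat \<Rightarrow> bool"
  assumes "P i" "\<not> P j" "i \<in> {1..N}" "j \<in> {1..N}"
  shows "\<exists>t. 1 \<le> t \<and> t + 1 \<le> N \<and> P t \<noteq> P (t + 1)"
proof (rule ccontr)
  assume "\<not> ?thesis"
  then have step: "1 \<le> t \<Longrightarrow> t + 1 \<le> N \<Longrightarrow> P (t + 1) = P t" for t by blast
  have "P k = P 1" if "k \<in> {1..N}" for k
    using that
  proof (induction k)
    case (Suc k)
    then show ?case using step[of k] by (cases k) auto
  qed simp
  then show False using assms by blast
qed

lemma sparse_subset:
  fixes M :: "nat set"
  assumes "finite M" "3 * n \<le> card M"
  obtains C where "C \<subseteq> M" "n \<le> card C" "\<And>i j. i \<in> C \<Longrightarrow> j \<in> C \<Longrightarrow> i \<noteq> j \<Longrightarrow> i + 3 \<le> j \<or> j + 3 \<le> i"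
proof -
  have "(\<lambda>j. j mod 3) \<in> M \<rightarrow> {0, 1, 2 :: nat}" by auto
  from pigeonhole_card[OF this assms(1)]
  obtain r where "card M \<le> card ((\<lambda>j. j mod 3) -` {r} \<inter> M) * card {0, 1, 2 :: nat}"
    by auto
  then have "n \<le> card ((\<lambda>j. j mod 3) -` {r} \<inter> M)" using assms(2) by simp
  moreover have far: "i + 3 \<le> j" if "i mod 3 = j mod 3" "i < j" for i j :: nat
  proof -
    have "3 dvd j - i" using that mod_eq_dvd_iff_nat[where m = j and n = i and q = 3] by simp
    then show ?thesis using dvd_imp_le[of 3 "j - i"] that(2) by linarith
  qed
  moreover have "i + 3 \<le> j \<or> j + 3 \<le> i" if "i mod 3 = j mod 3" "i \<noteq> j" for i j :: nat
    using that far[of i j] far[of j i] by (cases "i < j") auto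
  ultimately show ?thesis using that[of "(\<lambda>j. j mod 3) -` {r} \<inter> M"] by force
qed

lemma balanced_cut_grid_bounds:
  assumes finV: "finite V" and grid: "Xgrid N \<subseteq> V" and rest: "card (V - Xgrid N) \<le> 2 * N"
    and N: "16 \<le> N" and AV: "A \<subseteq> V"
    and b1: "card V \<le> 3 * card A" and b2: "3 * card A \<le> 2 * card V"
  shows "N * N \<le> 4 * card (A \<inter> Xgrid N)" "N * N \<le> 4 * card (Xgrid N - A)"
proof -
  have NN: "16 * N \<le> N * N" using N by simp
  have cV: "card V = N * N + card (V - Xgrid N)"
    using card_Diff_subset[OF finite_Xgrid grid] card_Xgrid[of N] card_mono[OF finV grid] by simp
  have "A \<subseteq> (A \<inter> Xgrid N) \<union> (V - Xgrid N)" using AV by blast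
  then have "card A \<le> card (A \<inter> Xgrid N) + card (V - Xgrid N)"
    using finV by (meson card_Un_le card_mono finite_Diff finite_Int finite_UnI finite_Xgrid order_trans)
  then show "N * N \<le> 4 * card (A \<inter> Xgrid N)" using cV b1 rest NN by linarith
  have "card (V - A) + card A = card V"
    using card_Diff_subset[OF finite_subset[OF AV finV] AV] card_mono[OF finV AV] by simp
  moreover have "V - A \<subseteq> (Xgrid N - A) \<union> (V - Xgrid N)" by blast
  then have "card (V - A) \<le> card (Xgrid N - A) + card (V - Xgrid N)"
    using finV by (meson card_Un_le card_mono finite_Diff finite_UnI finite_Xgrid order_trans)
  ultimately show "N * N \<le> 4 * card (Xgrid N - A)" using cV b2 rest NN by linarith
qed

text \<open>If no row lies entirely inside \<open>A\<close> or no row lies entirely outside \<open>A\<close>, then the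
  mixed rows carry all of one side of the cut.\<close>
lemma many_mixed_rows:
  assumes few: "card (mixed_columns A N) < N"
    and bnd: "N * N \<le> 4 * card (A \<inter> Xgrid N)" "N * N \<le> 4 * card (Xgrid N - A)"
  shows "N \<le> 4 * card (mixed_rows A N)"
proof -
  let ?R = "(\<lambda>(j, a). Xv j a) ` ({1..N} \<times> mixed_rows A N)"
  have bound: "card D \<le> N * card (mixed_rows A N)"
    if D: "D \<subseteq> Xgrid N" "\<And>j a. Xv j a \<in> D \<Longrightarrow> a \<in> {1..N} \<Longrightarrow> a \<in> mixed_rows A N" for D
  proof -
    have "D \<subseteq> ?R"
    proof
      fix x assume "x \<in> D"
      with D(1) obtain j a where "x = Xv j a" "j \<in> {1..N}" "a \<in> {1..N}" by (blast elim: XgridE)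
      then show "x \<in> ?R" using D(2) \<open>x \<in> D\<close> by (intro image_eqI[of _ _ "(j, a)"]) auto
    qed
    moreover have fin: "finite (mixed_rows A N)" unfolding mixed_rows_def by simp
    then have "card ?R \<le> N * card (mixed_rows A N)"
      using card_image_le[of "{1..N} \<times> mixed_rows A N" "\<lambda>(j, a). Xv j a"]
      by (simp add: card_cartesian_product)
    ultimately show ?thesis using fin card_mono[of ?R D] by fastforce
  qed
  have "\<not> ((\<exists>a1\<in>{1..N}. \<forall>j\<in>{1..N}. Xv j a1 \<in> A) \<and> (\<exists>a2\<in>{1..N}. \<forall>j\<in>{1..N}. Xv j a2 \<notin> A))"
  proof
    assume "(\<exists>a1\<in>{1..N}. \<forall>j\<in>{1..N}. Xv j a1 \<in> A) \<and> (\<exists>a2\<in>{1..N}. \<forall>j\<in>{1..N}. Xv j a2 \<notin> A)"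
    then have "mixed_columns A N = {1..N}" unfolding mixed_columns_def by blast
    then show False using few by simp
  qed
  then consider "\<forall>a\<in>{1..N}. \<exists>j\<in>{1..N}. Xv j a \<notin> A" | "\<forall>a\<in>{1..N}. \<exists>j\<in>{1..N}. Xv j a \<in> A"
    by blast
  then have "N * N \<le> N * (4 * card (mixed_rows A N))"
  proof cases
    case 1
    then have "card (A \<inter> Xgrid N) \<le> N * card (mixed_rows A N)"
      by (intro bound) (auto simp: mixed_rows_def)
    then show ?thesis using bnd(1) by linarith
  next
    case 2
    then have "card (Xgrid N - A) \<le> N * card (mixed_rows A N)"
      by (intro bound) (auto simp: mixed_rows_def)
    then show ?thesis using bnd(2) by linarith
  qed
  then show ?thesis by (cases "N = 0") (simp_all add: mult_le_cancel1)
qed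

lemma pigeonhole_fiber:
  assumes "f \<in> B \<rightarrow> C" "finite B" "finite C" "card C * n < card B"
  obtains y where "y \<in> C" "n < card (f -` {y} \<inter> B)"
proof -
  have "B \<noteq> {}" using assms(4) by (metis card.empty not_less0)
  then have "C \<noteq> {}" using assms(1) by blast
  then obtain y where y: "y \<in> C" "card B \<le> card (f -` {y} \<inter> B) * card C"
    using pigeonhole_card[OF assms(1-3)] by blast
  then have "\<not> card (f -` {y} \<inter> B) \<le> n"
    using assms(4) mult_le_mono1[of _ n "card C"] by (metis le_trans mult.commute not_le)
  then show ?thesis using that y(1) by simp
qed

lemma rows_switch_at_pure_columns:
  assumes pure: "t \<notin> mixed_columns A N" "t + 1 \<notin> mixed_columns A N"
    and t: "1 \<le> t" "t + 1 \<le> N" and a: "a \<in> {1..N}" "(Xv t a \<in> A) \<noteq> (Xv (t + 1) a \<in> A)"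
  shows "rows_switch_at A t {1..N}"
proof -
  have "Xv t b \<in> A \<longleftrightarrow> Xv t a \<in> A" "Xv (t + 1) b \<in> A \<longleftrightarrow> Xv (t + 1) a \<in> A" if "b \<in> {1..N}" for b
    using pure t a(1) that unfolding mixed_columns_def by auto
  then show ?thesis using a(2) unfolding rows_switch_at_def by blast
qed

lemma many_rows_switch_together:
  assumes finB: "finite B" and finM: "finite M"
    and switch: "\<And>a. a \<in> B \<Longrightarrow> 1 \<le> \<tau> a \<and> \<tau> a + 1 \<le> N \<and> (Xv (\<tau> a) a \<in> A) \<noteq> (Xv (\<tau> a + 1) a \<in> A)"
    and near: "\<And>a. a \<in> B \<Longrightarrow> \<tau> a \<in> M \<or> \<tau> a + 1 \<in> M"
    and many: "4 * card M * n < card B"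
  shows "\<exists>t S. 1 \<le> t \<and> t + 1 \<le> N \<and> S \<subseteq> B \<and> n < card S \<and> rows_switch_at A t S"
proof -
  define f where "f a = (\<tau> a, Xv (\<tau> a) a \<in> A)" for a
  define C where "C = (M \<union> (\<lambda>j. j - 1) ` M) \<times> (UNIV :: bool set)"
  have fC: "f \<in> B \<rightarrow> C"
    using near unfolding f_def C_def by (force intro: rev_image_eqI)
  have finC: "finite C" unfolding C_def using finM by simp
  have "card C \<le> 4 * card M"
    unfolding C_def using card_Un_le[of M "(\<lambda>j. j - 1) ` M"] card_image_le[OF finM, of "\<lambda>j. j - 1"]
    by (simp add: card_cartesian_product)
  then have "card C * n < card B" using many mult_le_mono1[of "card C" "4 * card M" n] by linarith
  then obtain y where "y \<in> C" "n < card (f -` {y} \<inter> B)" by (rule pigeonhole_fiber[OF fC finB finC])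
  moreover obtain t d where y: "y = (t, d)" by (cases y)
  ultimately have big: "n < card (f -` {(t, d)} \<inter> B)" by simp
  then obtain a0 where "a0 \<in> f -` {(t, d)} \<inter> B" by (metis card.empty ex_in_conv not_less0)
  then have t: "1 \<le> t" "t + 1 \<le> N" using switch unfolding f_def by auto
  have "(Xv t a \<in> A \<longleftrightarrow> d) \<and> (Xv (t + 1) a \<in> A \<longleftrightarrow> \<not> d)" if "a \<in> f -` {(t, d)} \<inter> B" for a
    using that switch[of a] unfolding f_def by auto
  then have "rows_switch_at A t (f -` {(t, d)} \<inter> B)"
    unfolding rows_switch_at_def by (cases d) auto
  then show ?thesis using t big by blast
qed

text \<open>Each mixed row switches between two consecutive columns. Either some row switches between
  two columns that are not mixed, and then every row switches there, or all switches happen next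
  to the few mixed columns, and then many rows switch at the same place.\<close>
lemma switching_rows_exist:
  assumes few: "card (mixed_columns A N) < 3 * n" and N: "48 * n * n < N"
    and rows: "N \<le> 4 * card (mixed_rows A N)"
  shows "\<exists>t S. 1 \<le> t \<and> t + 1 \<le> N \<and> S \<subseteq> {1..N} \<and> n < card S \<and> rows_switch_at A t S"
proof -
  define M where "M = mixed_columns A N"
  define B where "B = mixed_rows A N"
  have finM: "finite M" and finB: "finite B" and BN: "B \<subseteq> {1..N}"
    unfolding M_def B_def mixed_columns_def mixed_rows_def by auto
  have "\<exists>t. 1 \<le> t \<and> t + 1 \<le> N \<and> (Xv t a \<in> A) \<noteq> (Xv (t + 1) a \<in> A)" if "a \<in> B" for a
    using that switch_point[of "\<lambda>j. Xv j a \<in> A"] unfolding B_def mixed_rows_def by blast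
  then obtain \<tau> where \<tau>: "\<And>a. a \<in> B \<Longrightarrow> 1 \<le> \<tau> a \<and> \<tau> a + 1 \<le> N \<and> (Xv (\<tau> a) a \<in> A) \<noteq> (Xv (\<tau> a + 1) a \<in> A)"
    by metis
  show ?thesis
  proof (cases "\<exists>a\<in>B. \<tau> a \<notin> M \<and> \<tau> a + 1 \<notin> M")
    case True
    then obtain a where a: "a \<in> B" "\<tau> a \<notin> M" "\<tau> a + 1 \<notin> M" by blast
    have "n < N" using N by (cases n) auto
    moreover have "rows_switch_at A (\<tau> a) {1..N}"
      by (rule rows_switch_at_pure_columns[where a = a]) (use a \<tau>[OF a(1)] BN in \<open>auto simp: M_def\<close>)
    ultimately show ?thesis using \<tau>[OF a(1)] by (intro exI[of _ "\<tau> a"] exI[of _ "{1..N}"]) auto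
  next
    case False
    have "4 * card M * n \<le> 12 * n * n" using few mult_le_mono1[of "4 * card M" "12 * n" n]
      unfolding M_def by linarith
    then have "4 * card M * n < card B" using N rows unfolding B_def by linarith
    moreover have "\<tau> a \<in> M \<or> \<tau> a + 1 \<in> M" if "a \<in> B" for a using False that by blast
    ultimately obtain t S where "1 \<le> t" "t + 1 \<le> N" "S \<subseteq> B" "n < card S" "rows_switch_at A t S"
      using many_rows_switch_together[OF finB finM \<tau>] by blast
    then show ?thesis using BN by (intro exI[of _ t] exI[of _ S]) blast
  qed
qed

section \<open>Graphs built on the grid\<close>

definition column_pair_independent :: "qv graph \<Rightarrow> nat \<Rightarrow> nat set \<Rightarrow> bool" where
  "column_pair_independent G t S \<longleftrightarrow>
     rows_independent S S (\<lambda>a b. {Xv t a, Xv (t + 1) b} \<in> snd G) \<and>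
     rows_independent S S (\<lambda>a b. {Xv (t + 1) a, Xv t b} \<in> snd G)"

lemma column_pair_independentI:
  assumes "rows_independent S S P" "rows_independent S S Q"
    and "\<And>a b. a \<in> S \<Longrightarrow> b \<in> S \<Longrightarrow> {Xv t a, Xv (t + 1) b} \<in> snd G \<longleftrightarrow> P a b"
    and "\<And>a b. a \<in> S \<Longrightarrow> b \<in> S \<Longrightarrow> {Xv (t + 1) a, Xv t b} \<in> snd G \<longleftrightarrow> Q a b"
  shows "column_pair_independent G t S"
proof -
  have "rows_independent S S (\<lambda>a b. {Xv t a, Xv (t + 1) b} \<in> snd G)"
    by (rule rows_independent_cong[OF assms(1)]) (use assms(3) in blast)
  moreover have "rows_independent S S (\<lambda>a b. {Xv (t + 1) a, Xv t b} \<in> snd G)"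
    by (rule rows_independent_cong[OF assms(2)]) (use assms(4) in blast)
  ultimately show ?thesis unfolding column_pair_independent_def ..
qed

locale column_grid =
  fixes G :: "qv graph" and N :: nat
  assumes grid_subset: "Xgrid N \<subseteq> fst G"
    and vertices_subset: "fst G \<subseteq> Xgrid N \<union> Yv ` {1..N} \<union> Zv ` {1..N}"
    and far_columns_nonadjacent: "j + 2 \<le> j' \<Longrightarrow> {Xv j a, Xv j' b} \<notin> snd G"
    and mixed_column_cut_edge: "j \<in> {1..N} \<Longrightarrow> a \<in> {1..N} \<Longrightarrow> b \<in> {1..N} \<Longrightarrow> Xv j a \<in> A
      \<Longrightarrow> Xv j b \<notin> A \<Longrightarrow> \<exists>r\<in>A \<inter> near_column j. \<exists>c\<in>(fst G - A) \<inter> near_column j. {r, c} \<in> snd G"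
    and consecutive_columns_independent: "1 \<le> t \<Longrightarrow> t + 1 \<le> N \<Longrightarrow> S \<subseteq> {1..N}
      \<Longrightarrow> \<exists>S'\<subseteq>S. card S \<le> card S' + 1 \<and> column_pair_independent G t S'"
begin

lemma finite_vertices: "finite (fst G)"
  by (rule finite_subset[OF vertices_subset]) simp

lemma card_outside_grid: "card (fst G - Xgrid N) \<le> 2 * N"
proof -
  have "fst G - Xgrid N \<subseteq> Yv ` {1..N} \<union> Zv ` {1..N}" using vertices_subset by blast
  then have "card (fst G - Xgrid N) \<le> card (Yv ` {1..N} \<union> Zv ` {1..N})" by (intro card_mono) auto
  also have "\<dots> \<le> card (Yv ` {1..N}) + card (Zv ` {1..N})" by (rule card_Un_le)
  also have "\<dots> \<le> N + N" using card_image_le[of "{1..N}" Yv] card_image_le[of "{1..N}" Zv] by simp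
  finally show ?thesis by simp
qed

lemma near_columns_nonadjacent:
  assumes "r \<in> near_column i" "c \<in> near_column j" "i + 3 \<le> j \<or> j + 3 \<le> i"
  shows "{r, c} \<notin> snd G"
proof -
  obtain p x q y where "r = Xv p x" "p = i \<or> p + 1 = i" "c = Xv q y" "q = j \<or> q + 1 = j"
    using assms(1,2) unfolding near_column_def by blast
  then show ?thesis
    using assms(3) far_columns_nonadjacent[of p q x y] far_columns_nonadjacent[of q p y x]
    by (auto simp: insert_commute)
qed

text \<open>Cut edges next to mixed columns that are at least three apart form an induced matching.\<close>
lemma cutrank_ge_mixed_columns:
  assumes A: "A \<subseteq> fst G" and many: "3 * n \<le> card (mixed_columns A N)"
  shows "n \<le> cutrank G A"
proof -
  have "finite (mixed_columns A N)" unfolding mixed_columns_def by simp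
  then obtain C where C: "C \<subseteq> mixed_columns A N" "n \<le> card C"
    and sep: "\<And>i j. i \<in> C \<Longrightarrow> j \<in> C \<Longrightarrow> i \<noteq> j \<Longrightarrow> i + 3 \<le> j \<or> j + 3 \<le> i"
    using sparse_subset[OF _ many] by blast
  have "\<exists>r c. r \<in> A \<inter> near_column j \<and> c \<in> (fst G - A) \<inter> near_column j \<and> {r, c} \<in> snd G"
    if j: "j \<in> C" for j
  proof -
    obtain a b where "j \<in> {1..N}" "a \<in> {1..N}" "b \<in> {1..N}" "Xv j a \<in> A" "Xv j b \<notin> A"
      using C(1) j unfolding mixed_columns_def by blast
    then show ?thesis using mixed_column_cut_edge by blast
  qed
  then obtain r c where rc: "\<And>j. j \<in> C \<Longrightarrow>
      r j \<in> A \<inter> near_column j \<and> c j \<in> (fst G - A) \<inter> near_column j \<and> {r j, c j} \<in> snd G"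
    by metis
  have adj: "{r i, c j} \<in> snd G \<longleftrightarrow> i = j" if "i \<in> C" "j \<in> C" for i j
  proof (cases "i = j")
    case False
    then show ?thesis using near_columns_nonadjacent[of "r i" i "c j" j] rc that sep by blast
  qed (use rc that in blast)
  have "inj_on r C"
  proof (rule inj_onI)
    fix i j assume "i \<in> C" "j \<in> C" "r i = r j"
    then show "i = j" using adj[of i j] rc[of j] by simp
  qed
  moreover have "finite A" using A finite_vertices finite_subset by blast
  ultimately have "card C \<le> cutrank G A"
    using rc adj rows_independent_eq by (intro cutrank_ge_submatrix[where P = "(=)"]) auto
  then show ?thesis using C(2) by simp
qed

lemma cutrank_ge_column_pair:
  assumes A: "A \<subseteq> fst G" and cols: "s \<in> {1..N}" "s' \<in> {1..N}" and S: "S \<subseteq> {1..N}"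
    and sides: "\<And>a. a \<in> S \<Longrightarrow> Xv s a \<in> A \<and> Xv s' a \<notin> A"
    and indep: "rows_independent S S (\<lambda>a b. {Xv s a, Xv s' b} \<in> snd G)"
  shows "card S \<le> cutrank G A"
proof (rule cutrank_ge_submatrix[OF _ _ _ _ _ indep])
  show "finite A" using A finite_vertices finite_subset by blast
  show "Xv s ` S \<subseteq> A" "inj_on (Xv s) S" using sides by (auto simp: inj_on_def)
  have "Xv s' ` S \<subseteq> Xgrid N" using cols S by auto
  then show "Xv s' ` S \<subseteq> fst G - A" using sides grid_subset by blast
qed simp

lemma cutrank_ge_switching_rows:
  assumes A: "A \<subseteq> fst G" and t: "1 \<le> t" "t + 1 \<le> N" and S: "S \<subseteq> {1..N}" "n < card S"
    and switch: "rows_switch_at A t S"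
  shows "n \<le> cutrank G A"
proof -
  obtain S' where S': "S' \<subseteq> S" "card S \<le> card S' + 1"
    and indep: "rows_independent S' S' (\<lambda>a b. {Xv t a, Xv (t + 1) b} \<in> snd G)"
      "rows_independent S' S' (\<lambda>a b. {Xv (t + 1) a, Xv t b} \<in> snd G)"
    using consecutive_columns_independent[OF t S(1)] unfolding column_pair_independent_def by blast
  have cols: "t \<in> {1..N}" "t + 1 \<in> {1..N}" and S'N: "S' \<subseteq> {1..N}" using t S(1) S'(1) by auto
  from switch have "card S' \<le> cutrank G A"
    unfolding rows_switch_at_def
  proof
    assume "\<forall>a\<in>S. Xv t a \<in> A \<and> Xv (t + 1) a \<notin> A"
    then show ?thesis using cutrank_ge_column_pair[OF A cols S'N _ indep(1)] S'(1) by blast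
  next
    assume "\<forall>a\<in>S. Xv (t + 1) a \<in> A \<and> Xv t a \<notin> A"
    then show ?thesis using cutrank_ge_column_pair[OF A cols(2,1) S'N _ indep(2)] S'(1) by blast
  qed
  then show ?thesis using S(2) S'(2) by linarith
qed

lemma cutrank_ge_few_mixed_columns:
  assumes A: "A \<subseteq> fst G" and N: "48 * n * n < N"
    and bnd: "N * N \<le> 4 * card (A \<inter> Xgrid N)" "N * N \<le> 4 * card (Xgrid N - A)"
    and few: "card (mixed_columns A N) < 3 * n"
  shows "n \<le> cutrank G A"
proof -
  have "3 * n \<le> N" using N few by (cases n) auto
  then have "N \<le> 4 * card (mixed_rows A N)" using many_mixed_rows[OF _ bnd] few by simp
  then show ?thesis using switching_rows_exist[OF few N] cutrank_ge_switching_rows[OF A] by blast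
qed

theorem rankwidth_ge:
  assumes N: "16 \<le> N" "48 * n * n < N"
  shows "n \<le> rankwidth G"
proof (rule rankwidth_geI[OF finite_vertices])
  have "16 * 16 \<le> N * N" using mult_le_mono[OF N(1) N(1)] .
  then show "2 \<le> card (fst G)"
    using card_mono[OF finite_vertices grid_subset] card_Xgrid[of N] by simp
next
  fix A assume A: "A \<subseteq> fst G" and b: "card (fst G) \<le> 3 * card A" "3 * card A \<le> 2 * card (fst G)"
  note bnd = balanced_cut_grid_bounds[OF finite_vertices grid_subset card_outside_grid N(1) A b]
  show "n \<le> cutrank G A"
  proof (cases "3 * n \<le> card (mixed_columns A N)")
    case True
    then show ?thesis by (rule cutrank_ge_mixed_columns[OF A])
  next
    case False
    then show ?thesis using cutrank_ge_few_mixed_columns[OF A N(2) bnd] by simp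
  qed
qed

end

section \<open>The four constructions\<close>

lemma Xv_doubleton_eq_iff:
  "{Xv i a, Xv j b} = {Xv p x, Xv q y} \<longleftrightarrow> (i = p \<and> a = x \<and> j = q \<and> b = y) \<or> (i = q \<and> a = y \<and> j = p \<and> b = x)"
  by (auto simp: doubleton_eq_iff)

lemma Xv_edge_Mg_iff:
  "{Xv i a, Xv j b} \<in> snd (Mg m l (l + 1)) \<longleftrightarrow>
    a = b \<and> a \<in> {1..m} \<and> ((i = l \<and> j = l + 1) \<or> (i = l + 1 \<and> j = l))"
  unfolding Mg_def by (auto simp: Xv_doubleton_eq_iff)

lemma Xv_edge_Hg_iff:
  "{Xv i a, Xv j b} \<in> snd (Hg m l (l + 1)) \<longleftrightarrow>
    a \<in> {1..m} \<and> b \<in> {1..m} \<and> ((i = l \<and> j = l + 1 \<and> a \<le> b) \<or> (i = l + 1 \<and> j = l \<and> b \<le> a))"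
  unfolding Hg_def by (auto simp: Xv_doubleton_eq_iff)

lemma Xv_edge_Ag_iff:
  "{Xv i a, Xv j b} \<in> snd (Ag m l (l + 1)) \<longleftrightarrow>
    a \<in> {1..m} \<and> b \<in> {1..m} \<and> a \<noteq> b \<and> ((i = l \<and> j = l + 1) \<or> (i = l + 1 \<and> j = l))"
  unfolding Ag_def by (auto simp: Xv_doubleton_eq_iff)

lemma Xv_edge_clique_iff:
  "{Xv i a, Xv j b} \<in> snd (clique ({Yv l} \<union> Xs m l)) \<longleftrightarrow>
    i = l \<and> j = l \<and> a \<noteq> b \<and> a \<in> {1..m} \<and> b \<in> {1..m}" (is "?edge \<longleftrightarrow> ?rhs")
proof
  show "?edge \<Longrightarrow> ?rhs" unfolding clique_def Xs_def by (auto simp: doubleton_eq_iff)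
  assume ?rhs
  then have "Xv i a \<in> {Yv l} \<union> Xs m l" "Xv j b \<in> {Yv l} \<union> Xs m l" "Xv i a \<noteq> Xv j b"
    unfolding Xs_def by auto
  then show ?edge unfolding clique_def snd_conv by blast
qed

lemma Xv_edge_notin_cbip: "{Xv i a, Xv j b} \<notin> snd (cbip {Zv l} S)"
  unfolding cbip_def by (auto simp: doubleton_eq_iff)

lemma Xv_edge_Q_MKK_iff:
  "{Xv i a, Xv j b} \<in> snd (Q_MKK k m) \<longleftrightarrow>
    (\<exists>l\<in>{1..k-1}. a = b \<and> a \<in> {1..m} \<and> ((i = l \<and> j = l + 1) \<or> (i = l + 1 \<and> j = l))) \<or>
    (\<exists>l\<in>{1..k}. i = l \<and> j = l \<and> a \<noteq> b \<and> a \<in> {1..m} \<and> b \<in> {1..m})"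
  unfolding Q_MKK_def gunion_def gUnion_def
  by (simp only: snd_conv Un_iff UN_iff Xv_edge_Mg_iff Xv_edge_clique_iff)

lemma Xv_edge_Q_MKI_iff:
  "{Xv i a, Xv j b} \<in> snd (Q_MKI k m) \<longleftrightarrow>
    (\<exists>l\<in>{1..k-1}. a = b \<and> a \<in> {1..m} \<and> ((i = l \<and> j = l + 1) \<or> (i = l + 1 \<and> j = l))) \<or>
    (\<exists>l\<in>{1..(k+1) div 2}. i = 2*l-1 \<and> j = 2*l-1 \<and> a \<noteq> b \<and> a \<in> {1..m} \<and> b \<in> {1..m})"
  unfolding Q_MKI_def gunion_def gUnion_def
  by (simp only: snd_conv Un_iff UN_iff Xv_edge_Mg_iff Xv_edge_clique_iff)

lemma Xv_edge_Q_HKK_iff: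
  "{Xv i a, Xv j b} \<in> snd (Q_HKK k m) \<longleftrightarrow>
    (\<exists>l\<in>{1..k-1}. a \<in> {1..m} \<and> b \<in> {1..m} \<and> ((i = l \<and> j = l + 1 \<and> a \<le> b) \<or> (i = l + 1 \<and> j = l \<and> b \<le> a))) \<or>
    (\<exists>l\<in>{1..k}. i = l \<and> j = l \<and> a \<noteq> b \<and> a \<in> {1..m} \<and> b \<in> {1..m})"
  unfolding Q_HKK_def gunion_def gUnion_def
  by (simp only: snd_conv Un_iff UN_iff Xv_edge_Hg_iff Xv_edge_clique_iff)

lemma Xv_edge_Q_AKK_iff:
  "{Xv i a, Xv j b} \<in> snd (Q_AKK k m) \<longleftrightarrow>
    (\<exists>l\<in>{1..k-1}. a \<in> {1..m} \<and> b \<in> {1..m} \<and> a \<noteq> b \<and> ((i = l \<and> j = l + 1) \<or> (i = l + 1 \<and> j = l))) \<or>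
    (\<exists>l\<in>{1..k}. i = l \<and> j = l \<and> a \<noteq> b \<and> a \<in> {1..m} \<and> b \<in> {1..m})"
  unfolding Q_AKK_def gunion_def gUnion_def
  by (simp only: snd_conv Un_iff UN_iff Xv_edge_Ag_iff Xv_edge_clique_iff Xv_edge_notin_cbip
      simp_thms bex_simps) blast

lemma fst_Q_MKK:
  "fst (Q_MKK k m) = (\<Union>i\<in>{1..k-1}. Xs m i \<union> Xs m (i+1)) \<union> (\<Union>i\<in>{1..k}. {Yv i} \<union> Xs m i)"
  unfolding Q_MKK_def gunion_def gUnion_def Mg_def clique_def by simp

lemma fst_Q_MKI:
  "fst (Q_MKI k m) = (\<Union>i\<in>{1..k-1}. Xs m i \<union> Xs m (i+1)) \<union> (\<Union>i\<in>{1..(k+1) div 2}. {Yv (2*i-1)} \<union> Xs m (2*i-1))"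
  unfolding Q_MKI_def gunion_def gUnion_def Mg_def clique_def by simp

lemma fst_Q_HKK:
  "fst (Q_HKK k m) = (\<Union>i\<in>{1..k-1}. Xs m i \<union> Xs m (i+1)) \<union> (\<Union>i\<in>{1..k}. {Yv i} \<union> Xs m i)"
  unfolding Q_HKK_def gunion_def gUnion_def Hg_def clique_def by simp

lemma fst_Q_AKK:
  "fst (Q_AKK k m) = (\<Union>i\<in>{1..k-1}. Xs m i \<union> Xs m (i+1)) \<union> (\<Union>i\<in>{1..k}. {Yv i} \<union> Xs m i)
     \<union> (\<Union>i\<in>{1..k-1}. {Zv i} \<union> (Xs m i \<union> Xs m (i+1)))"
  unfolding Q_AKK_def gunion_def gUnion_def Ag_def clique_def cbip_def by simp

lemma Xgrid_eq_UN_Xs: "Xgrid N = (\<Union>j\<in>{1..N}. Xs N j)"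
  unfolding Xgrid_def Xs_def by auto

lemma consecutive_Xs_subset_Xgrid: "(\<Union>i\<in>{1..N-1}. Xs N i \<union> Xs N (i+1)) \<subseteq> Xgrid N"
  unfolding Xs_def by auto

lemma column_cliques_subset: "(\<Union>i\<in>{1..N}. {Yv i} \<union> Xs N i) \<subseteq> Xgrid N \<union> Yv ` {1..N}"
  unfolding Xs_def by auto

lemma odd_column_in_range: "(l::nat) \<in> {1..(N+1) div 2} \<Longrightarrow> 2 * l - 1 \<in> {1..N}"
  by (auto simp: less_eq_div_iff_mult_less_eq)

lemma odd_column_cliques_subset:
  "(\<Union>i\<in>{1..(N+1) div 2}. {Yv (2*i-1)} \<union> Xs N (2*i-1)) \<subseteq> Xgrid N \<union> Yv ` {1..N}"
  using odd_column_in_range[of _ N] unfolding Xs_def by fastforce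

lemma even_subset_almost_all:
  assumes "finite S"
  obtains S' where "S' \<subseteq> S" "even (card S')" "card S \<le> card S' + 1"
proof (cases "even (card S)")
  case False
  then obtain x where "x \<in> S" by fastforce
  then show ?thesis using that[of "S - {x}"] False assms by simp
qed (use that[of S] in auto)

lemma near_column_cut_edgeI:
  assumes "Xgrid N \<subseteq> fst G" "{Xv p x, Xv q y} \<in> snd G" "Xv p x \<in> A" "Xv q y \<notin> A"
    "q \<in> {1..N}" "y \<in> {1..N}" "p = j \<or> p + 1 = j" "q = j \<or> q + 1 = j"
  shows "\<exists>r\<in>A \<inter> near_column j. \<exists>c\<in>(fst G - A) \<inter> near_column j. {r, c} \<in> snd G"
proof -
  have "Xv q y \<in> fst G" using assms(1,5,6) by auto
  then show ?thesis using assms(2-4,7,8) unfolding near_column_def by blast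
qed

lemma column_grid_Q_MKK: "column_grid (Q_MKK N N) N"
proof unfold_locales
  show grid: "Xgrid N \<subseteq> fst (Q_MKK N N)" unfolding fst_Q_MKK Xgrid_eq_UN_Xs by blast
  show "fst (Q_MKK N N) \<subseteq> Xgrid N \<union> Yv ` {1..N} \<union> Zv ` {1..N}"
    unfolding fst_Q_MKK using consecutive_Xs_subset_Xgrid column_cliques_subset by blast
  show "{Xv j a, Xv j' b} \<notin> snd (Q_MKK N N)" if "j + 2 \<le> j'" for j j' a b
    using that unfolding Xv_edge_Q_MKK_iff by auto
  show "\<exists>r\<in>A \<inter> near_column j. \<exists>c\<in>(fst (Q_MKK N N) - A) \<inter> near_column j. {r, c} \<in> snd (Q_MKK N N)"
    if "j \<in> {1..N}" "a \<in> {1..N}" "b \<in> {1..N}" "Xv j a \<in> A" "Xv j b \<notin> A" for j a b A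
    by (rule near_column_cut_edgeI[OF grid _ that(4,5,1,3)]) (use that in \<open>auto simp: Xv_edge_Q_MKK_iff\<close>)
  show "\<exists>S'\<subseteq>S. card S \<le> card S' + 1 \<and> column_pair_independent (Q_MKK N N) t S'"
    if "1 \<le> t" "t + 1 \<le> N" "S \<subseteq> {1..N}" for t S
  proof -
    have "column_pair_independent (Q_MKK N N) t S"
      by (rule column_pair_independentI[OF rows_independent_eq rows_independent_eq])
        (use that in \<open>auto simp: Xv_edge_Q_MKK_iff\<close>)
    then show ?thesis by (intro exI[of _ S]) simp
  qed
qed

lemma column_grid_Q_HKK: "column_grid (Q_HKK N N) N"
proof unfold_locales
  show grid: "Xgrid N \<subseteq> fst (Q_HKK N N)" unfolding fst_Q_HKK Xgrid_eq_UN_Xs by blast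
  show "fst (Q_HKK N N) \<subseteq> Xgrid N \<union> Yv ` {1..N} \<union> Zv ` {1..N}"
    unfolding fst_Q_HKK using consecutive_Xs_subset_Xgrid column_cliques_subset by blast
  show "{Xv j a, Xv j' b} \<notin> snd (Q_HKK N N)" if "j + 2 \<le> j'" for j j' a b
    using that unfolding Xv_edge_Q_HKK_iff by auto
  show "\<exists>r\<in>A \<inter> near_column j. \<exists>c\<in>(fst (Q_HKK N N) - A) \<inter> near_column j. {r, c} \<in> snd (Q_HKK N N)"
    if "j \<in> {1..N}" "a \<in> {1..N}" "b \<in> {1..N}" "Xv j a \<in> A" "Xv j b \<notin> A" for j a b A
    by (rule near_column_cut_edgeI[OF grid _ that(4,5,1,3)]) (use that in \<open>auto simp: Xv_edge_Q_HKK_iff\<close>)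
  show "\<exists>S'\<subseteq>S. card S \<le> card S' + 1 \<and> column_pair_independent (Q_HKK N N) t S'"
    if "1 \<le> t" "t + 1 \<le> N" "S \<subseteq> {1..N}" for t S
  proof -
    have fin: "finite S" using that(3) finite_subset by blast
    have "column_pair_independent (Q_HKK N N) t S"
      by (rule column_pair_independentI[OF rows_independent_le[OF fin] rows_independent_ge[OF fin]])
        (use that in \<open>auto simp: Xv_edge_Q_HKK_iff\<close>)
    then show ?thesis by (intro exI[of _ S]) simp
  qed
qed

lemma column_grid_Q_AKK: "column_grid (Q_AKK N N) N"
proof unfold_locales
  show grid: "Xgrid N \<subseteq> fst (Q_AKK N N)" unfolding fst_Q_AKK Xgrid_eq_UN_Xs by blast
  show "fst (Q_AKK N N) \<subseteq> Xgrid N \<union> Yv ` {1..N} \<union> Zv ` {1..N}"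
  proof -
    have "(\<Union>i\<in>{1..N-1}. {Zv i} \<union> (Xs N i \<union> Xs N (i+1))) \<subseteq> Xgrid N \<union> Zv ` {1..N}"
      using consecutive_Xs_subset_Xgrid[of N] by auto
    then show ?thesis
      using consecutive_Xs_subset_Xgrid[of N] column_cliques_subset[of N] unfolding fst_Q_AKK by blast
  qed
  show "{Xv j a, Xv j' b} \<notin> snd (Q_AKK N N)" if "j + 2 \<le> j'" for j j' a b
    using that unfolding Xv_edge_Q_AKK_iff by auto
  show "\<exists>r\<in>A \<inter> near_column j. \<exists>c\<in>(fst (Q_AKK N N) - A) \<inter> near_column j. {r, c} \<in> snd (Q_AKK N N)"
    if "j \<in> {1..N}" "a \<in> {1..N}" "b \<in> {1..N}" "Xv j a \<in> A" "Xv j b \<notin> A" for j a b A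
    by (rule near_column_cut_edgeI[OF grid _ that(4,5,1,3)]) (use that in \<open>auto simp: Xv_edge_Q_AKK_iff\<close>)
  show "\<exists>S'\<subseteq>S. card S \<le> card S' + 1 \<and> column_pair_independent (Q_AKK N N) t S'"
    if t: "1 \<le> t" "t + 1 \<le> N" and S: "S \<subseteq> {1..N}" for t S
  proof -
    have "finite S" using S finite_subset by blast
    then obtain S' where S': "S' \<subseteq> S" "even (card S')" "card S \<le> card S' + 1"
      by (rule even_subset_almost_all)
    have fin: "finite S'" using finite_subset[OF S'(1) \<open>finite S\<close>] .
    have "column_pair_independent (Q_AKK N N) t S'"
      by (rule column_pair_independentI[OF rows_independent_neq[OF fin S'(2)] rows_independent_neq[OF fin S'(2)]])
        (use t S S' in \<open>auto simp: Xv_edge_Q_AKK_iff\<close>)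
    then show ?thesis using S' by blast
  qed
qed

lemma Xv_edge_Q_MKI_odd_column:
  assumes "odd i" "i \<in> {1..N}" "a \<in> {1..N}" "b \<in> {1..N}" "a \<noteq> b"
  shows "{Xv i a, Xv i b} \<in> snd (Q_MKI N N)"
proof -
  have "2 * ((i + 1) div 2) - 1 = i" "(i + 1) div 2 \<in> {1..(N + 1) div 2}"
    using assms(1,2) by (auto elim!: oddE)
  then show ?thesis unfolding Xv_edge_Q_MKI_iff using assms by (intro disjI2 bexI[of _ "(i + 1) div 2"]) auto
qed

lemma Xgrid_subset_Q_MKI: "Xgrid N \<subseteq> fst (Q_MKI N N)"
proof
  fix x assume "x \<in> Xgrid N"
  then obtain j a where x: "x = Xv j a" "j \<in> {1..N}" "a \<in> {1..N}" by (rule XgridE)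
  consider "j + 1 \<le> N" | "j = N" "2 \<le> N" | "j = 1" "N = 1" using x(2) by fastforce
  then show "x \<in> fst (Q_MKI N N)"
  proof cases
    case 1
    then have "j \<in> {1..N - 1}" "x \<in> Xs N j" using x unfolding Xs_def by auto
    then show ?thesis unfolding fst_Q_MKI by blast
  next
    case 2
    then have "N - 1 \<in> {1..N - 1}" "x \<in> Xs N (N - 1 + 1)" using x unfolding Xs_def by auto
    then show ?thesis unfolding fst_Q_MKI by blast
  next
    case 3
    then show ?thesis unfolding fst_Q_MKI Xs_def using x by auto
  qed
qed

text \<open>An even column \<open>j\<close> is no clique, but column \<open>j - 1\<close> is, and it is matched to column \<open>j\<close>.\<close>
lemma cut_edge_Q_MKI:
  assumes j: "j \<in> {1..N}" and ab: "a \<in> {1..N}" "b \<in> {1..N}" "Xv j a \<in> A" "Xv j b \<notin> A"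
  shows "\<exists>r\<in>A \<inter> near_column j. \<exists>c\<in>(fst (Q_MKI N N) - A) \<inter> near_column j. {r, c} \<in> snd (Q_MKI N N)"
proof -
  note cut = near_column_cut_edgeI[OF Xgrid_subset_Q_MKI]
  have "a \<noteq> b" using ab by auto
  show ?thesis
  proof (cases "odd j")
    case True
    show ?thesis
      by (rule cut[OF Xv_edge_Q_MKI_odd_column[OF True j ab(1,2) \<open>a \<noteq> b\<close>] ab(3,4) j ab(2)]) simp_all
  next
    case False
    define p where "p = j - 1"
    have p: "p + 1 = j" "p \<in> {1..N}" "odd p" using False j unfolding p_def by (auto elim: evenE)
    have matched: "{Xv p x, Xv j x} \<in> snd (Q_MKI N N)" "{Xv j x, Xv p x} \<in> snd (Q_MKI N N)"
      if "x \<in> {1..N}" for x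
      using p j that unfolding Xv_edge_Q_MKI_iff by auto
    consider "Xv p a \<notin> A" | "Xv p b \<in> A" | "Xv p a \<in> A" "Xv p b \<notin> A" by blast
    then show ?thesis
    proof cases
      case 1
      show ?thesis by (rule cut[OF matched(2)[OF ab(1)] ab(3) 1 p(2) ab(1)]) (use p in simp_all)
    next
      case 2
      show ?thesis by (rule cut[OF matched(1)[OF ab(2)] 2 ab(4) j ab(2)]) (use p in simp_all)
    next
      case 3
      show ?thesis
        by (rule cut[OF Xv_edge_Q_MKI_odd_column[OF p(3,2) ab(1,2) \<open>a \<noteq> b\<close>] 3 p(2) ab(2)])
          (use p in simp_all)
    qed
  qed
qed

lemma column_grid_Q_MKI: "column_grid (Q_MKI N N) N"
proof unfold_locales
  show "Xgrid N \<subseteq> fst (Q_MKI N N)" by (rule Xgrid_subset_Q_MKI)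
  show "fst (Q_MKI N N) \<subseteq> Xgrid N \<union> Yv ` {1..N} \<union> Zv ` {1..N}"
    unfolding fst_Q_MKI using consecutive_Xs_subset_Xgrid odd_column_cliques_subset by blast
  show "{Xv j a, Xv j' b} \<notin> snd (Q_MKI N N)" if "j + 2 \<le> j'" for j j' a b
    using that unfolding Xv_edge_Q_MKI_iff by auto
  show "\<exists>r\<in>A \<inter> near_column j. \<exists>c\<in>(fst (Q_MKI N N) - A) \<inter> near_column j. {r, c} \<in> snd (Q_MKI N N)"
    if "j \<in> {1..N}" "a \<in> {1..N}" "b \<in> {1..N}" "Xv j a \<in> A" "Xv j b \<notin> A" for j a b A
    using cut_edge_Q_MKI that by blast
  show "\<exists>S'\<subseteq>S. card S \<le> card S' + 1 \<and> column_pair_independent (Q_MKI N N) t S'"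
    if "1 \<le> t" "t + 1 \<le> N" "S \<subseteq> {1..N}" for t S
  proof -
    have "column_pair_independent (Q_MKI N N) t S"
      by (rule column_pair_independentI[OF rows_independent_eq rows_independent_eq])
        (use that in \<open>auto simp: Xv_edge_Q_MKI_iff\<close>)
    then show ?thesis by (intro exI[of _ S]) simp
  qed
qed

theorem lemma8p7:
  shows "\<exists>f :: nat \<Rightarrow> nat. \<forall>n \<ge> 1.
     rankwidth (Q_MKI (f n) (f n)) \<ge> n \<and> rankwidth (Q_MKK (f n) (f n)) \<ge> n \<and>
     rankwidth (Q_AKK (f n) (f n)) \<ge> n \<and> rankwidth (Q_HKK (f n) (f n)) \<ge> n"
proof (intro exI allI impI)
  fix n :: nat
  let ?N = "48 * n * n + 16"
  have N: "16 \<le> ?N" "48 * n * n < ?N" by simp_all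
  show "rankwidth (Q_MKI ?N ?N) \<ge> n \<and> rankwidth (Q_MKK ?N ?N) \<ge> n \<and>
     rankwidth (Q_AKK ?N ?N) \<ge> n \<and> rankwidth (Q_HKK ?N ?N) \<ge> n"
    using column_grid.rankwidth_ge[OF column_grid_Q_MKI N] column_grid.rankwidth_ge[OF column_grid_Q_MKK N]
      column_grid.rankwidth_ge[OF column_grid_Q_AKK N] column_grid.rankwidth_ge[OF column_grid_Q_HKK N]
    by simp
qed

end
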